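(* Let $(\rho,\rho_t)$ be a solution on a time interval of the system $\frac{d\rho}{dt}=\rho_t$, $\frac{d\rho_t}{dt}=f(\rho,\rho_t)$ with $\int_0^1\rho(t,x)^2dx=1$ for all $t$ in the interval, and set $G(t,x)=G(\rho(t),\rho_t(t))(x)$. Then $$\frac{d}{dt}\int_0^1\big(\rho^2G^2+4\rho_t^2\big)\,dx=0.$$
   Context: $S^1=\mathbb{R}/\mathbb{Z}$; functions on $S^1$ are $1$-periodic functions on $[0,1]$. Fix $\mu\in\mathbb{R}$. For $\rho,\sigma\in L^2(S^1)$ define $$G(\rho,\sigma)(x)=\int_0^x 2\rho\sigma\,dy+\mu-\int_0^1\Big(\int_0^y 2\rho\sigma\,dz\Big)\rho(y)^2\,dy,$$ $$F(\rho,\sigma)(x)=\int_0^1\frac{\cosh\big(\big|\int_y^x\rho(z)^2dz\big|-\tfrac12\big)}{2\sinh(1/2)}\big(\rho(y)^2G(y)^2+2\sigma(y)^2\big)\,dy,\qquad f(\rho,\sigma)=\tfrac12\rho\,(G^2-F),$$ with $G=G(\rho,\sigma)$. In the system, $\rho_t$ denotes the second unknown. *)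

theory Defs
  imports "HOL-Analysis.Analysis"
begin

text \<open>Functions on S^1 = R/Z are represented by real functions; only their values on
  [0,1] enter. All integrals are Lebesgue integrals over subintervals of [0,1].\<close>

definition sqint01 :: "(real \<Rightarrow> real) \<Rightarrow> bool" where
  "sqint01 g \<longleftrightarrow> set_borel_measurable lborel {0..1} g \<and>
     set_integrable lborel {0..1} (\<lambda>x. (g x)^2)"

definition l2dist01 :: "(real \<Rightarrow> real) \<Rightarrow> (real \<Rightarrow> real) \<Rightarrow> real" where
  "l2dist01 g h = sqrt (LINT x:{0..1}|lborel. (g x - h x)^2)"

definition Gop :: "real \<Rightarrow> (real \<Rightarrow> real) \<Rightarrow> (real \<Rightarrow> real) \<Rightarrow> real \<Rightarrow> real" where
  "Gop \<mu> \<rho> \<sigma> x =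
     (LINT y:{0..x}|lborel. 2 * \<rho> y * \<sigma> y) + \<mu>
     - (LINT y:{0..1}|lborel. (LINT z:{0..y}|lborel. 2 * \<rho> z * \<sigma> z) * (\<rho> y)^2)"

text \<open>The signed integral from y to x of rho^2 has absolute value equal to the integral of
  rho^2 over the interval between x and y.\<close>
definition Fop :: "real \<Rightarrow> (real \<Rightarrow> real) \<Rightarrow> (real \<Rightarrow> real) \<Rightarrow> real \<Rightarrow> real" where
  "Fop \<mu> \<rho> \<sigma> x =
     (LINT y:{0..1}|lborel.
        cosh (\<bar>LINT z:{min x y..max x y}|lborel. (\<rho> z)^2\<bar> - 1/2) / (2 * sinh (1/2))
        * ((\<rho> y)^2 * (Gop \<mu> \<rho> \<sigma> y)^2 + 2 * (\<sigma> y)^2))"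

definition fop :: "real \<Rightarrow> (real \<Rightarrow> real) \<Rightarrow> (real \<Rightarrow> real) \<Rightarrow> real \<Rightarrow> real" where
  "fop \<mu> \<rho> \<sigma> x = 1/2 * \<rho> x * ((Gop \<mu> \<rho> \<sigma> x)^2 - Fop \<mu> \<rho> \<sigma> x)"

definition has_L2_derivative ::
  "(real \<Rightarrow> real \<Rightarrow> real) \<Rightarrow> (real \<Rightarrow> real) \<Rightarrow> real \<Rightarrow> real set \<Rightarrow> bool" where
  "has_L2_derivative u v t I \<longleftrightarrow>
     ((\<lambda>s. l2dist01 (\<lambda>x. (u s x - u t x) / (s - t)) v) \<longlongrightarrow> 0) (at t within I)"

end

theory Submission
  imports Defs
begin

text \<open>
  Since the curve stays on the unit sphere of \<open>L\<^sup>2\<close>, differentiating \<open>\<integral>\<rho>\<^sup>2 = 1\<close> shows that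
  \<open>\<integral>\<rho>\<rho>\<^sub>t = 0\<close>; hence \<open>G\<close> is periodic and \<open>\<integral>\<rho>\<^sup>2G = \<mu>\<close>, so that
  \<open>P(x) = \<integral>\<^sub>0\<^sup>x \<rho>\<^sup>2(G - \<mu>)\<close> vanishes at both ends. Because the time derivatives exist in \<open>L\<^sup>2\<close>,
  the energy can be differentiated under the integral sign (products converge in \<open>L\<^sup>1\<close>, and \<open>G\<close>
  converges uniformly). After inserting \<open>f = \<rho>(G\<^sup>2 - F)/2\<close>, the integrand of the derivative is a sum
  of exact derivatives (of \<open>G\<^sup>3\<close> and of \<open>P \<partial>\<^sub>t(\<integral>\<^sub>0\<^sup>x 2\<rho>\<rho>\<^sub>t)\<close>), of two terms whose integrals
  cancel, and of \<open>-2(F m + (\<rho>\<^sup>2G\<^sup>2 + 2\<rho>\<^sub>t\<^sup>2) P)\<close> with \<open>m = 2\<rho>\<rho>\<^sub>t - P\<rho>\<^sup>2\<close>. The kernel of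
  \<open>F\<close> is the Green's function of \<open>1 - d\<^sup>2/d\<theta>\<^sup>2\<close> on a circle of length 1 in the variable
  \<open>\<theta>(x) = \<integral>\<^sub>0\<^sup>x \<rho>\<^sup>2\<close>, and it maps \<open>m\<close> to \<open>-P\<close>; by Fubini the last term integrates to zero
  as well.
\<close>

subsection \<open>Lebesgue measure on [0,1]\<close>

definition lborel01 :: "real measure" where
  "lborel01 = restrict_space lborel {0..1}"

lemma space_lborel01 [simp]: "space lborel01 = {0..1}"
  by (simp add: lborel01_def)

interpretation lborel01: finite_measure lborel01
  unfolding lborel01_def by (rule finite_measureI) (simp add: emeasure_restrict_space)

lemma set_borel_measurable_01_iff:
  fixes f :: "real \<Rightarrow> real"
  shows "set_borel_measurable lborel {0..1} f \<longleftrightarrow> f \<in> borel_measurable lborel01"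
  unfolding lborel01_def set_borel_measurable_def
  using borel_measurable_restrict_space_iff[of "{0..1}" lborel f] by simp

lemma set_integrable_01_iff:
  fixes f :: "real \<Rightarrow> real"
  shows "set_integrable lborel {0..1} f \<longleftrightarrow> integrable lborel01 f"
  unfolding lborel01_def set_integrable_def
  using integrable_restrict_space[of "{0..1}" lborel f] by simp

lemma set_integral_01_eq:
  fixes f :: "real \<Rightarrow> real"
  shows "(LINT x:{0..1}|lborel. f x) = integral\<^sup>L lborel01 f"
  unfolding lborel01_def set_lebesgue_integral_def
  using integral_restrict_space[of "{0..1}" lborel f] by simp

lemma set_integral_Icc_eq_indicator:
  fixes f :: "real \<Rightarrow> real"
  assumes "0 \<le> a" "b \<le> 1"
  shows "(LINT y:{a..b}|lborel. f y) = integral\<^sup>L lborel01 (\<lambda>y. indicator {a..b} y * f y)"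
proof -
  have "(LINT y:{a..b}|lborel. f y)
      = integral\<^sup>L lborel (\<lambda>y. indicator {0..1} y *\<^sub>R (indicator {a..b} y * f y))"
    unfolding set_lebesgue_integral_def
    by (rule Bochner_Integration.integral_cong) (use assms in \<open>auto simp: indicator_def\<close>)
  also have "\<dots> = integral\<^sup>L lborel01 (\<lambda>y. indicator {a..b} y * f y)"
    unfolding lborel01_def
    using integral_restrict_space[of "{0..1}" lborel "\<lambda>y. indicator {a..b} y * f y"] by simp
  finally show ?thesis .
qed

lemma borel_measurable_continuous_on_01:
  fixes f :: "real \<Rightarrow> real"
  shows "continuous_on {0..1} f \<Longrightarrow> f \<in> borel_measurable lborel01"
  unfolding lborel01_def
  by (metis borel_measurable_continuous_on_restrict measurable_cong_sets sets_lborel sets_restrict_space)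

lemma measurable_ident_lborel01 [measurable]: "(\<lambda>x::real. x) \<in> borel_measurable lborel01"
  by (intro borel_measurable_continuous_on_01 continuous_on_id)

lemma integrable_indicator_mult:
  fixes g :: "real \<Rightarrow> real"
  assumes "integrable lborel01 g"
  shows "integrable lborel01 (\<lambda>y. indicator {a..b} y * g y)"
proof (rule Bochner_Integration.integrable_bound[OF assms])
  show "(\<lambda>y. indicator {a..b} y * g y) \<in> borel_measurable lborel01"
    using borel_measurable_integrable[OF assms] by measurable
qed (auto simp: indicator_def)

lemma continuous_on_01_bounded:
  assumes "continuous_on {0..1} (g :: real \<Rightarrow> real)"
  obtains M where "\<And>x. x \<in> {0..1} \<Longrightarrow> \<bar>g x\<bar> \<le> M"
  using compact_continuous_image[OF assms compact_Icc] compact_imp_bounded bounded_iff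
  by (metis image_eqI real_norm_def)

lemma integrable_continuous_on_mult:
  fixes g w :: "real \<Rightarrow> real"
  assumes "continuous_on {0..1} g" "integrable lborel01 w"
  shows "integrable lborel01 (\<lambda>x. g x * w x)"
proof -
  obtain M where M: "\<And>x. x \<in> {0..1} \<Longrightarrow> \<bar>g x\<bar> \<le> M"
    using continuous_on_01_bounded[OF assms(1)] by blast
  then have "0 \<le> M" by force
  show ?thesis
  proof (rule Bochner_Integration.integrable_bound)
    show "integrable lborel01 (\<lambda>x. M * w x)" using assms by simp
    show "(\<lambda>x. g x * w x) \<in> borel_measurable lborel01"
      using borel_measurable_continuous_on_01[OF assms(1)] borel_measurable_integrable[OF assms(2)]
      by measurable
    show "AE x in lborel01. norm (g x * w x) \<le> norm (M * w x)"
      using M \<open>0 \<le> M\<close> by (intro AE_I2) (auto simp: abs_mult mult_right_mono)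
  qed
qed

lemma abs_integral_diff_le:
  fixes a b :: "'a \<Rightarrow> real"
  assumes "integrable M a" "integrable M b"
  shows "\<bar>integral\<^sup>L M a - integral\<^sup>L M b\<bar> \<le> integral\<^sup>L M (\<lambda>x. \<bar>a x - b x\<bar>)"
proof -
  have "integral\<^sup>L M a - integral\<^sup>L M b = integral\<^sup>L M (\<lambda>x. a x - b x)"
    using assms by simp
  also have "\<bar>\<dots>\<bar> \<le> integral\<^sup>L M (\<lambda>x. \<bar>a x - b x\<bar>)"
    using integral_norm_bound[of M "\<lambda>x. a x - b x"] by simp
  finally show ?thesis .
qed

subsection \<open>Square integrable functions on [0,1]\<close>

lemma integrable_mult_if_square_integrable:
  fixes u v :: "'a \<Rightarrow> real"
  assumes [measurable]: "u \<in> borel_measurable M" "v \<in> borel_measurable M"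
    and "integrable M (\<lambda>x. (u x)^2)" "integrable M (\<lambda>x. (v x)^2)"
  shows "integrable M (\<lambda>x. u x * v x)"
proof (rule Bochner_Integration.integrable_bound)
  show "integrable M (\<lambda>x. (u x)^2 + (v x)^2)" using assms by simp
  show "AE x in M. norm (u x * v x) \<le> norm ((u x)^2 + (v x)^2)"
  proof (intro AE_I2)
    fix x
    have "2 * (\<bar>u x\<bar> * \<bar>v x\<bar>) \<le> (u x)^2 + (v x)^2"
      using sum_squares_bound[of "\<bar>u x\<bar>" "\<bar>v x\<bar>"] by (simp add: mult.assoc)
    moreover have "0 \<le> \<bar>u x\<bar> * \<bar>v x\<bar>" by simp
    ultimately have "\<bar>u x\<bar> * \<bar>v x\<bar> \<le> (u x)^2 + (v x)^2" by linarith
    then show "norm (u x * v x) \<le> norm ((u x)^2 + (v x)^2)"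
      by (simp add: abs_mult)
  qed
qed measurable

lemma Cauchy_Schwarz_integral:
  fixes u v :: "'a \<Rightarrow> real"
  assumes [measurable]: "u \<in> borel_measurable M" "v \<in> borel_measurable M"
    and "integrable M (\<lambda>x. (u x)^2)" "integrable M (\<lambda>x. (v x)^2)"
  shows "(\<integral>x. \<bar>u x * v x\<bar> \<partial>M) \<le> sqrt (\<integral>x. (u x)^2 \<partial>M) * sqrt (\<integral>x. (v x)^2 \<partial>M)"
proof -
  have "(\<integral>\<^sup>+x. ennreal \<bar>u x\<bar> * ennreal \<bar>v x\<bar> \<partial>M) = (\<integral>\<^sup>+x. ennreal \<bar>u x * v x\<bar> \<partial>M)"
    by (simp add: abs_mult ennreal_mult)
  also have "\<dots> = ennreal (\<integral>x. \<bar>u x * v x\<bar> \<partial>M)"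
    using integrable_mult_if_square_integrable[OF assms] by (intro nn_integral_eq_integral) auto
  finally have "ennreal ((\<integral>x. \<bar>u x * v x\<bar> \<partial>M)^2)
      = (\<integral>\<^sup>+x. ennreal \<bar>u x\<bar> * ennreal \<bar>v x\<bar> \<partial>M)^2"
    by (simp add: ennreal_power)
  also have "\<dots> \<le> (\<integral>\<^sup>+x. ennreal \<bar>u x\<bar> ^ 2 \<partial>M) * (\<integral>\<^sup>+x. ennreal \<bar>v x\<bar> ^ 2 \<partial>M)"
    by (rule Cauchy_Schwarz_nn_integral) measurable
  also have "\<dots> = ennreal ((\<integral>x. (u x)^2 \<partial>M) * (\<integral>x. (v x)^2 \<partial>M))"
    using assms(3,4) by (simp add: nn_integral_eq_integral ennreal_power ennreal_mult')
  finally have "(\<integral>x. \<bar>u x * v x\<bar> \<partial>M)^2 \<le> (\<integral>x. (u x)^2 \<partial>M) * (\<integral>x. (v x)^2 \<partial>M)"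
    by (simp add: ennreal_le_iff)
  then show ?thesis
    by (metis real_le_rsqrt real_sqrt_mult)
qed

lemma sqint01_iff:
  "sqint01 u \<longleftrightarrow> u \<in> borel_measurable lborel01 \<and> integrable lborel01 (\<lambda>x. (u x)^2)"
  unfolding sqint01_def set_borel_measurable_01_iff set_integrable_01_iff ..

lemma sqint01_measurable [measurable_dest]: "sqint01 u \<Longrightarrow> u \<in> borel_measurable lborel01"
  by (simp add: sqint01_iff)

lemma sqint01_integrable_square: "sqint01 u \<Longrightarrow> integrable lborel01 (\<lambda>x. (u x)^2)"
  by (simp add: sqint01_iff)

lemma sqint01_integrable_mult: "sqint01 u \<Longrightarrow> sqint01 v \<Longrightarrow> integrable lborel01 (\<lambda>x. u x * v x)"
  by (intro integrable_mult_if_square_integrable) (auto simp: sqint01_iff)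

lemma sqint01_Cauchy_Schwarz:
  assumes "sqint01 u" "sqint01 v"
  shows "(\<integral>x. \<bar>u x * v x\<bar> \<partial>lborel01)
    \<le> sqrt (\<integral>x. (u x)^2 \<partial>lborel01) * sqrt (\<integral>x. (v x)^2 \<partial>lborel01)"
  using assms by (intro Cauchy_Schwarz_integral) (auto simp: sqint01_iff)

lemma sqint01_add [intro]:
  assumes "sqint01 u" "sqint01 v"
  shows "sqint01 (\<lambda>x. u x + v x)"
proof -
  have "integrable lborel01 (\<lambda>x. (u x)^2 + (v x)^2 + 2 * (u x * v x))"
    using sqint01_integrable_mult[OF assms] assms by (auto simp: sqint01_iff)
  then have "integrable lborel01 (\<lambda>x. (u x + v x)^2)"
    by (simp add: power2_sum mult.assoc)
  then show ?thesis
    using assms by (auto simp: sqint01_iff)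
qed

lemma sqint01_cmult [intro]: "sqint01 u \<Longrightarrow> sqint01 (\<lambda>x. c * u x)"
  by (auto simp: sqint01_iff power_mult_distrib)

lemma sqint01_divide [intro]: "sqint01 u \<Longrightarrow> sqint01 (\<lambda>x. u x / c)"
  by (auto simp: sqint01_iff power_divide)

lemma sqint01_diff [intro]: "sqint01 u \<Longrightarrow> sqint01 v \<Longrightarrow> sqint01 (\<lambda>x. u x - v x)"
  using sqint01_add[of u "\<lambda>x. -1 * v x"] sqint01_cmult[of v "-1"] by simp

lemma sqint01_bounded_mult:
  assumes "sqint01 u" "g \<in> borel_measurable lborel01" "\<And>x. x \<in> {0..1} \<Longrightarrow> \<bar>g x\<bar> \<le> B"
  shows "sqint01 (\<lambda>x. g x * u x)"
  unfolding sqint01_iff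
proof
  show "(\<lambda>x. g x * u x) \<in> borel_measurable lborel01" using assms by measurable
  show "integrable lborel01 (\<lambda>x. (g x * u x)^2)"
  proof (rule Bochner_Integration.integrable_bound)
    show "integrable lborel01 (\<lambda>x. B^2 * (u x)^2)"
      using sqint01_integrable_square[OF assms(1)] by simp
    show "AE x in lborel01. norm ((g x * u x)^2) \<le> norm (B^2 * (u x)^2)"
    proof (rule AE_I2)
      fix x assume "x \<in> space lborel01"
      then have "\<bar>g x\<bar> \<le> B" using assms(3) by simp
      then have "(g x)^2 \<le> B^2" using power_mono[of "\<bar>g x\<bar>" B 2] by simp
      then show "norm ((g x * u x)^2) \<le> norm (B^2 * (u x)^2)"
        by (simp add: power_mult_distrib mult_right_mono)
    qed
  qed (use assms in measurable)
qed

lemma set_integrable_Icc_01: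
  fixes g :: "real \<Rightarrow> real"
  shows "integrable lborel01 g \<Longrightarrow> 0 \<le> a \<Longrightarrow> b \<le> 1 \<Longrightarrow> set_integrable lborel {a..b} g"
  by (rule set_integrable_subset[of _ "{0..1}"]) (auto simp: set_integrable_01_iff)

lemma set_integral_Icc_eq_HK:
  fixes g :: "real \<Rightarrow> real"
  assumes "integrable lborel01 g" "0 \<le> a" "b \<le> 1"
  shows "g integrable_on {a..b}" "(LINT y:{a..b}|lborel. g y) = integral {a..b} g"
  using set_integrable_Icc_01[OF assms] by (auto intro: set_borel_integral_eq_integral)

lemma set_integral_point_0:
  fixes g :: "real \<Rightarrow> real"
  shows "integrable lborel01 g \<Longrightarrow> (LINT y:{0}|lborel. g y) = 0"
  using set_integral_Icc_eq_HK(2)[of g 0 0] by simp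

lemma abs_indefinite_integral_le:
  fixes g :: "real \<Rightarrow> real"
  assumes "integrable lborel01 g" "x \<in> {0..1}"
  shows "\<bar>LINT y:{0..x}|lborel. g y\<bar> \<le> integral\<^sup>L lborel01 (\<lambda>y. \<bar>g y\<bar>)"
proof -
  have "(LINT y:{0..x}|lborel. g y) = integral\<^sup>L lborel01 (\<lambda>y. indicator {0..x} y * g y)"
    using assms by (intro set_integral_Icc_eq_indicator) auto
  also have "\<bar>\<dots>\<bar> \<le> integral\<^sup>L lborel01 (\<lambda>y. \<bar>g y\<bar>)"
    using integrable_indicator_mult[OF assms(1)] assms(1)
    by (intro integral_abs_bound_integral) (auto simp: indicator_def)
  finally show ?thesis .
qed

lemma continuous_on_indefinite_integral_01:
  fixes g :: "real \<Rightarrow> real"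
  assumes "integrable lborel01 g"
  shows "continuous_on {0..1} (\<lambda>x. LINT y:{0..x}|lborel. g y)"
proof -
  have "continuous_on {0..1} (\<lambda>x. integral {0..x} g)"
    using set_integral_Icc_eq_HK(1)[OF assms, of 0 1] by (intro indefinite_integral_continuous_1) auto
  moreover have "(LINT y:{0..x}|lborel. g y) = integral {0..x} g" if "x \<in> {0..1}" for x
    using set_integral_Icc_eq_HK(2)[OF assms, of 0 x] that by auto
  ultimately show ?thesis by (metis (no_types, lifting) continuous_on_eq)
qed

lemma continuous_on_kernel_integral:
  fixes K :: "real \<Rightarrow> real \<Rightarrow> real"
  assumes cont: "\<And>y. y \<in> {0..1} \<Longrightarrow> continuous_on {0..1} (\<lambda>x. K x y)"
    and int: "\<And>x. x \<in> {0..1} \<Longrightarrow> integrable lborel01 (\<lambda>y. K x y * h y)"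
    and bound: "\<And>x y. x \<in> {0..1} \<Longrightarrow> y \<in> {0..1} \<Longrightarrow> \<bar>K x y\<bar> \<le> C"
    and h: "integrable lborel01 h"
  shows "continuous_on {0..1} (\<lambda>x. integral\<^sup>L lborel01 (\<lambda>y. K x y * h y))"
proof (rule continuous_on_sequentiallyI)
  fix u :: "nat \<Rightarrow> real" and a
  assume u: "\<forall>n. u n \<in> {0..1}" and a: "a \<in> {0..1}" and lim: "u \<longlonglongrightarrow> a"
  show "(\<lambda>n. integral\<^sup>L lborel01 (\<lambda>y. K (u n) y * h y)) \<longlonglongrightarrow> integral\<^sup>L lborel01 (\<lambda>y. K a y * h y)"
  proof (rule integral_dominated_convergence[where w="\<lambda>y. C * \<bar>h y\<bar>"])
    show "AE y in lborel01. (\<lambda>n. K (u n) y * h y) \<longlonglongrightarrow> K a y * h y"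
    proof (rule AE_I2)
      fix y assume "y \<in> space lborel01"
      then have "(\<lambda>n. K (u n) y) \<longlonglongrightarrow> K a y"
        using cont a u lim unfolding continuous_on_sequentially comp_def by auto
      then show "(\<lambda>n. K (u n) y * h y) \<longlonglongrightarrow> K a y * h y"
        by (intro tendsto_intros)
    qed
    show "AE y in lborel01. norm (K (u n) y * h y) \<le> C * \<bar>h y\<bar>" for n
      using bound u by (intro AE_I2) (simp add: abs_mult mult_right_mono)
  qed (use int u a h in auto)
qed

subsection \<open>Convergence of families of functions on [0,1]\<close>

definition L2_tendsto :: "'i filter \<Rightarrow> ('i \<Rightarrow> real \<Rightarrow> real) \<Rightarrow> (real \<Rightarrow> real) \<Rightarrow> bool" where
  "L2_tendsto F a b \<longleftrightarrow> sqint01 b \<and> eventually (\<lambda>s. sqint01 (a s)) F \<and>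
     ((\<lambda>s. integral\<^sup>L lborel01 (\<lambda>x. (a s x - b x)^2)) \<longlongrightarrow> 0) F"

definition L1_tendsto :: "'i filter \<Rightarrow> ('i \<Rightarrow> real \<Rightarrow> real) \<Rightarrow> (real \<Rightarrow> real) \<Rightarrow> bool" where
  "L1_tendsto F a b \<longleftrightarrow> integrable lborel01 b \<and> eventually (\<lambda>s. integrable lborel01 (a s)) F \<and>
     ((\<lambda>s. integral\<^sup>L lborel01 (\<lambda>x. \<bar>a s x - b x\<bar>)) \<longlongrightarrow> 0) F"

definition unif_tendsto :: "'i filter \<Rightarrow> ('i \<Rightarrow> real \<Rightarrow> real) \<Rightarrow> (real \<Rightarrow> real) \<Rightarrow> bool" where
  "unif_tendsto F a b \<longleftrightarrow> continuous_on {0..1} b \<and> eventually (\<lambda>s. continuous_on {0..1} (a s)) F \<and>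
     (\<exists>B. (B \<longlongrightarrow> 0) F \<and> eventually (\<lambda>s. \<forall>x\<in>{0..1}. \<bar>a s x - b x\<bar> \<le> B s) F)"

lemma abs_mult_diff_le:
  fixes a b a' b' :: real
  shows "\<bar>a * b - a' * b'\<bar> \<le> \<bar>a - a'\<bar> * \<bar>b\<bar> + \<bar>a'\<bar> * \<bar>b - b'\<bar>"
proof -
  have "a * b - a' * b' = (a - a') * b + a' * (b - b')" by (simp add: algebra_simps)
  then show ?thesis by (metis abs_mult abs_triangle_ineq)
qed

lemma L2_tendsto_const: "sqint01 b \<Longrightarrow> L2_tendsto F (\<lambda>s. b) b"
  unfolding L2_tendsto_def by simp

lemma integral_square_le_diff:
  assumes "sqint01 b" "sqint01 c"
  shows "integral\<^sup>L lborel01 (\<lambda>x. (b x)^2)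
    \<le> 2 * integral\<^sup>L lborel01 (\<lambda>x. (b x - c x)^2) + 2 * integral\<^sup>L lborel01 (\<lambda>x. (c x)^2)"
proof -
  have "integral\<^sup>L lborel01 (\<lambda>x. (b x)^2)
      \<le> integral\<^sup>L lborel01 (\<lambda>x. 2 * (b x - c x)^2 + 2 * (c x)^2)"
  proof (rule integral_mono)
    fix x
    have "0 \<le> (b x - 2 * c x)^2" by simp
    then show "(b x)^2 \<le> 2 * (b x - c x)^2 + 2 * (c x)^2"
      by (simp add: power2_diff power_mult_distrib)
  qed (use sqint01_integrable_square[OF assms(1)] sqint01_integrable_square[OF assms(2)]
      sqint01_integrable_square[OF sqint01_diff[OF assms]] in simp_all)
  then show ?thesis
    using sqint01_integrable_square[OF assms(2)] sqint01_integrable_square[OF sqint01_diff[OF assms]]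
    by simp
qed

lemma integral_abs_mult_diff_le:
  assumes "sqint01 a" "sqint01 b" "sqint01 a'" "sqint01 b'"
  shows "integral\<^sup>L lborel01 (\<lambda>x. \<bar>a x * b x - a' x * b' x\<bar>)
    \<le> sqrt (integral\<^sup>L lborel01 (\<lambda>x. (a x - a' x)^2)) * sqrt (integral\<^sup>L lborel01 (\<lambda>x. (b x)^2))
      + sqrt (integral\<^sup>L lborel01 (\<lambda>x. (a' x)^2)) * sqrt (integral\<^sup>L lborel01 (\<lambda>x. (b x - b' x)^2))"
proof -
  have da: "sqint01 (\<lambda>x. a x - a' x)" and db: "sqint01 (\<lambda>x. b x - b' x)"
    using assms by auto
  have "integral\<^sup>L lborel01 (\<lambda>x. \<bar>a x * b x - a' x * b' x\<bar>)
      \<le> integral\<^sup>L lborel01 (\<lambda>x. \<bar>(a x - a' x) * b x\<bar> + \<bar>a' x * (b x - b' x)\<bar>)"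
  proof (rule integral_mono)
    show "\<bar>a x * b x - a' x * b' x\<bar> \<le> \<bar>(a x - a' x) * b x\<bar> + \<bar>a' x * (b x - b' x)\<bar>" for x
      using abs_mult_diff_le[of "a x" "b x" "a' x" "b' x"] by (simp add: abs_mult)
  qed (use sqint01_integrable_mult[OF assms(1,2)] sqint01_integrable_mult[OF assms(3,4)]
      sqint01_integrable_mult[OF da assms(2)] sqint01_integrable_mult[OF assms(3) db] in simp_all)
  also have "\<dots> = integral\<^sup>L lborel01 (\<lambda>x. \<bar>(a x - a' x) * b x\<bar>)
      + integral\<^sup>L lborel01 (\<lambda>x. \<bar>a' x * (b x - b' x)\<bar>)"
    using sqint01_integrable_mult[OF da assms(2)] sqint01_integrable_mult[OF assms(3) db] by simp
  also have "\<dots> \<le> sqrt (integral\<^sup>L lborel01 (\<lambda>x. (a x - a' x)^2)) * sqrt (integral\<^sup>L lborel01 (\<lambda>x. (b x)^2))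
      + sqrt (integral\<^sup>L lborel01 (\<lambda>x. (a' x)^2)) * sqrt (integral\<^sup>L lborel01 (\<lambda>x. (b x - b' x)^2))"
    using sqint01_Cauchy_Schwarz[OF da assms(2)] sqint01_Cauchy_Schwarz[OF assms(3) db]
    by (rule add_mono)
  finally show ?thesis .
qed

lemma L1_tendsto_mult:
  assumes A: "L2_tendsto F a a'" and B: "L2_tendsto F b b'"
  shows "L1_tendsto F (\<lambda>s x. a s x * b s x) (\<lambda>x. a' x * b' x)"
proof -
  have sa: "sqint01 a'" and sb: "sqint01 b'" using A B by (auto simp: L2_tendsto_def)
  define da where "da s = integral\<^sup>L lborel01 (\<lambda>x. (a s x - a' x)^2)" for s
  define db where "db s = integral\<^sup>L lborel01 (\<lambda>x. (b s x - b' x)^2)" for s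
  define Ca where "Ca = integral\<^sup>L lborel01 (\<lambda>x. (a' x)^2)"
  define Cb where "Cb = integral\<^sup>L lborel01 (\<lambda>x. (b' x)^2)"
  define U where "U s = sqrt (da s) * sqrt (2 * db s + 2 * Cb) + sqrt Ca * sqrt (db s)" for s
  have "(U \<longlongrightarrow> sqrt 0 * sqrt (2 * 0 + 2 * Cb) + sqrt Ca * sqrt 0) F"
    unfolding U_def using A B unfolding L2_tendsto_def da_def db_def by (intro tendsto_intros) auto
  then have U: "(U \<longlongrightarrow> 0) F" by simp
  have ev: "eventually (\<lambda>s. sqint01 (a s) \<and> sqint01 (b s)) F"
    using A B unfolding L2_tendsto_def by (auto intro: eventually_conj)
  have bound: "eventually (\<lambda>s. integral\<^sup>L lborel01 (\<lambda>x. \<bar>a s x * b s x - a' x * b' x\<bar>) \<le> U s) F"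
    using ev
  proof (rule eventually_mono)
    fix s assume s: "sqint01 (a s) \<and> sqint01 (b s)"
    have "sqrt (integral\<^sup>L lborel01 (\<lambda>x. (b s x)^2)) \<le> sqrt (2 * db s + 2 * Cb)"
      using integral_square_le_diff[of "b s" b'] s sb unfolding db_def Cb_def by simp
    then have "sqrt (da s) * sqrt (integral\<^sup>L lborel01 (\<lambda>x. (b s x)^2)) + sqrt Ca * sqrt (db s) \<le> U s"
      unfolding U_def da_def by (intro add_right_mono mult_left_mono) auto
    with integral_abs_mult_diff_le[of "a s" "b s" a' b'] s sa sb
    show "integral\<^sup>L lborel01 (\<lambda>x. \<bar>a s x * b s x - a' x * b' x\<bar>) \<le> U s"
      unfolding da_def db_def Ca_def by linarith
  qed
  have "((\<lambda>s. integral\<^sup>L lborel01 (\<lambda>x. \<bar>a s x * b s x - a' x * b' x\<bar>)) \<longlongrightarrow> 0) F"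
    by (rule tendsto_sandwich[OF _ bound tendsto_const U]) (simp add: always_eventually)
  moreover have "eventually (\<lambda>s. integrable lborel01 (\<lambda>x. a s x * b s x)) F"
    using ev by (rule eventually_mono) (auto intro: sqint01_integrable_mult)
  ultimately show ?thesis
    unfolding L1_tendsto_def using sqint01_integrable_mult[OF sa sb] by auto
qed

lemma L1_tendsto_const: "integrable lborel01 b \<Longrightarrow> L1_tendsto F (\<lambda>s. b) b"
  unfolding L1_tendsto_def by simp

lemma L1_tendsto_add:
  assumes A: "L1_tendsto F a a'" and B: "L1_tendsto F b b'"
  shows "L1_tendsto F (\<lambda>s x. a s x + b s x) (\<lambda>x. a' x + b' x)"
proof -
  have ev: "eventually (\<lambda>s. integrable lborel01 (a s) \<and> integrable lborel01 (b s)) F"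
    using A B unfolding L1_tendsto_def by (auto intro: eventually_conj)
  have lim: "((\<lambda>s. integral\<^sup>L lborel01 (\<lambda>x. \<bar>a s x - a' x\<bar>)
      + integral\<^sup>L lborel01 (\<lambda>x. \<bar>b s x - b' x\<bar>)) \<longlongrightarrow> 0 + 0) F"
    using A B unfolding L1_tendsto_def by (intro tendsto_add) auto
  have "eventually (\<lambda>s. integral\<^sup>L lborel01 (\<lambda>x. \<bar>(a s x + b s x) - (a' x + b' x)\<bar>) \<le>
      integral\<^sup>L lborel01 (\<lambda>x. \<bar>a s x - a' x\<bar>) + integral\<^sup>L lborel01 (\<lambda>x. \<bar>b s x - b' x\<bar>)) F"
    using ev
  proof (rule eventually_mono)
    fix s assume i: "integrable lborel01 (a s) \<and> integrable lborel01 (b s)"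
    have "integral\<^sup>L lborel01 (\<lambda>x. \<bar>(a s x + b s x) - (a' x + b' x)\<bar>)
        \<le> integral\<^sup>L lborel01 (\<lambda>x. \<bar>a s x - a' x\<bar> + \<bar>b s x - b' x\<bar>)"
      using i A B unfolding L1_tendsto_def by (intro integral_mono) auto
    also have "\<dots> = integral\<^sup>L lborel01 (\<lambda>x. \<bar>a s x - a' x\<bar>) + integral\<^sup>L lborel01 (\<lambda>x. \<bar>b s x - b' x\<bar>)"
      using i A B unfolding L1_tendsto_def by (intro Bochner_Integration.integral_add) auto
    finally show "integral\<^sup>L lborel01 (\<lambda>x. \<bar>(a s x + b s x) - (a' x + b' x)\<bar>) \<le>
      integral\<^sup>L lborel01 (\<lambda>x. \<bar>a s x - a' x\<bar>) + integral\<^sup>L lborel01 (\<lambda>x. \<bar>b s x - b' x\<bar>)" .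
  qed
  from tendsto_sandwich[OF _ this tendsto_const] lim
  have "((\<lambda>s. integral\<^sup>L lborel01 (\<lambda>x. \<bar>(a s x + b s x) - (a' x + b' x)\<bar>)) \<longlongrightarrow> 0) F"
    by (simp add: always_eventually)
  moreover have "eventually (\<lambda>s. integrable lborel01 (\<lambda>x. a s x + b s x)) F"
    using ev by (rule eventually_mono) auto
  ultimately show ?thesis using A B unfolding L1_tendsto_def by auto
qed

lemma L1_tendsto_cmult:
  assumes "L1_tendsto F a a'"
  shows "L1_tendsto F (\<lambda>s x. c * a s x) (\<lambda>x. c * a' x)"
proof -
  have "((\<lambda>s. \<bar>c\<bar> * integral\<^sup>L lborel01 (\<lambda>x. \<bar>a s x - a' x\<bar>)) \<longlongrightarrow> \<bar>c\<bar> * 0) F"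
    using assms unfolding L1_tendsto_def by (intro tendsto_mult) auto
  moreover have "(\<lambda>s. integral\<^sup>L lborel01 (\<lambda>x. \<bar>c * a s x - c * a' x\<bar>))
      = (\<lambda>s. \<bar>c\<bar> * integral\<^sup>L lborel01 (\<lambda>x. \<bar>a s x - a' x\<bar>))"
    by (simp add: right_diff_distrib[symmetric] abs_mult)
  moreover have "eventually (\<lambda>s. integrable lborel01 (\<lambda>x. c * a s x)) F"
    using assms unfolding L1_tendsto_def by (auto elim: eventually_mono)
  ultimately show ?thesis using assms unfolding L1_tendsto_def by auto
qed

lemma L1_tendsto_integral:
  assumes "L1_tendsto F a a'"
  shows "((\<lambda>s. integral\<^sup>L lborel01 (a s)) \<longlongrightarrow> integral\<^sup>L lborel01 a') F"
proof -
  have "eventually (\<lambda>s. \<bar>integral\<^sup>L lborel01 (a s) - integral\<^sup>L lborel01 a'\<bar>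
      \<le> integral\<^sup>L lborel01 (\<lambda>x. \<bar>a s x - a' x\<bar>)) F"
    using assms unfolding L1_tendsto_def by (auto elim!: eventually_mono intro: abs_integral_diff_le)
  from tendsto_sandwich[OF _ this tendsto_const] assms
  have "((\<lambda>s. \<bar>integral\<^sup>L lborel01 (a s) - integral\<^sup>L lborel01 a'\<bar>) \<longlongrightarrow> 0) F"
    unfolding L1_tendsto_def by (simp add: always_eventually)
  then show ?thesis by (simp add: tendsto_rabs_zero_iff LIM_zero_iff)
qed

lemma unif_tendsto_bound_nonneg:
  fixes a b :: "real \<Rightarrow> real"
  assumes "\<forall>x\<in>{0..1}. \<bar>a x - b x\<bar> \<le> (B::real)"
  shows "0 \<le> B"
proof -
  have "\<bar>a 0 - b 0\<bar> \<le> B" using bspec[OF assms, of 0] by simp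
  then show ?thesis by linarith
qed

lemma integral_abs_mult_diff_le_bounded:
  fixes g g' w w' :: "real \<Rightarrow> real"
  assumes "continuous_on {0..1} g" "continuous_on {0..1} g'" "integrable lborel01 w" "integrable lborel01 w'"
    and B: "\<And>x. x \<in> {0..1} \<Longrightarrow> \<bar>g x - g' x\<bar> \<le> B" and M: "\<And>x. x \<in> {0..1} \<Longrightarrow> \<bar>g' x\<bar> \<le> M"
  shows "integral\<^sup>L lborel01 (\<lambda>x. \<bar>g x * w x - g' x * w' x\<bar>)
    \<le> B * (integral\<^sup>L lborel01 (\<lambda>x. \<bar>w x - w' x\<bar>) + integral\<^sup>L lborel01 (\<lambda>x. \<bar>w' x\<bar>))
      + M * integral\<^sup>L lborel01 (\<lambda>x. \<bar>w x - w' x\<bar>)"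
proof -
  have "0 \<le> B" using B[of 0] by simp
  have "integral\<^sup>L lborel01 (\<lambda>x. \<bar>g x * w x - g' x * w' x\<bar>)
      \<le> integral\<^sup>L lborel01 (\<lambda>x. B * (\<bar>w x - w' x\<bar> + \<bar>w' x\<bar>) + M * \<bar>w x - w' x\<bar>)"
  proof (rule integral_mono)
    fix x assume "x \<in> space lborel01"
    then have x: "x \<in> {0..1}" by simp
    have "\<bar>g x * w x - g' x * w' x\<bar> \<le> \<bar>g x - g' x\<bar> * \<bar>w x\<bar> + \<bar>g' x\<bar> * \<bar>w x - w' x\<bar>"
      by (rule abs_mult_diff_le)
    also have "\<dots> \<le> B * (\<bar>w x - w' x\<bar> + \<bar>w' x\<bar>) + M * \<bar>w x - w' x\<bar>"
      using B[OF x] M[OF x] \<open>0 \<le> B\<close> by (intro add_mono mult_mono) auto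
    finally show "\<bar>g x * w x - g' x * w' x\<bar> \<le> B * (\<bar>w x - w' x\<bar> + \<bar>w' x\<bar>) + M * \<bar>w x - w' x\<bar>" .
  qed (use assms(3,4) integrable_continuous_on_mult[OF assms(1,3)] integrable_continuous_on_mult[OF assms(2,4)]
      in auto)
  also have "\<dots> = B * (integral\<^sup>L lborel01 (\<lambda>x. \<bar>w x - w' x\<bar>) + integral\<^sup>L lborel01 (\<lambda>x. \<bar>w' x\<bar>))
      + M * integral\<^sup>L lborel01 (\<lambda>x. \<bar>w x - w' x\<bar>)"
    using assms(3,4) by (simp add: distrib_left)
  finally show ?thesis .
qed

lemma L1_tendsto_unif_mult:
  assumes G: "unif_tendsto F g g'" and W: "L1_tendsto F w w'"
  shows "L1_tendsto F (\<lambda>s x. g s x * w s x) (\<lambda>x. g' x * w' x)"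
proof -
  obtain B where B: "(B \<longlongrightarrow> 0) F" "eventually (\<lambda>s. \<forall>x\<in>{0..1}. \<bar>g s x - g' x\<bar> \<le> B s) F"
    using G unfolding unif_tendsto_def by blast
  have cg: "continuous_on {0..1} g'" and iw: "integrable lborel01 w'"
    using G W by (simp_all add: unif_tendsto_def L1_tendsto_def)
  obtain M where M: "\<And>x. x \<in> {0..1} \<Longrightarrow> \<bar>g' x\<bar> \<le> M"
    using continuous_on_01_bounded[OF cg] by blast
  define D where "D s = integral\<^sup>L lborel01 (\<lambda>x. \<bar>w s x - w' x\<bar>)" for s
  define Wc where "Wc = integral\<^sup>L lborel01 (\<lambda>x. \<bar>w' x\<bar>)"
  have ev: "eventually (\<lambda>s. continuous_on {0..1} (g s) \<and> integrable lborel01 (w s)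
      \<and> (\<forall>x\<in>{0..1}. \<bar>g s x - g' x\<bar> \<le> B s)) F"
    using G W B(2) unfolding unif_tendsto_def L1_tendsto_def by (auto intro: eventually_conj)
  then have bound: "eventually (\<lambda>s. integral\<^sup>L lborel01 (\<lambda>x. \<bar>g s x * w s x - g' x * w' x\<bar>)
      \<le> B s * (D s + Wc) + M * D s) F"
    by (rule eventually_mono)
      (use cg iw M in \<open>auto simp: D_def Wc_def intro!: integral_abs_mult_diff_le_bounded\<close>)
  have "((\<lambda>s. B s * (D s + Wc) + M * D s) \<longlongrightarrow> 0 * (0 + Wc) + M * 0) F"
    using W unfolding L1_tendsto_def D_def by (intro tendsto_intros B) auto
  with tendsto_sandwich[OF _ bound tendsto_const]
  have "((\<lambda>s. integral\<^sup>L lborel01 (\<lambda>x. \<bar>g s x * w s x - g' x * w' x\<bar>)) \<longlongrightarrow> 0) F"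
    by (simp add: always_eventually)
  moreover have "eventually (\<lambda>s. integrable lborel01 (\<lambda>x. g s x * w s x)) F"
    using ev by (rule eventually_mono) (auto intro: integrable_continuous_on_mult)
  ultimately show ?thesis
    using cg iw unfolding L1_tendsto_def by (auto intro: integrable_continuous_on_mult)
qed

lemma unif_tendsto_const: "continuous_on {0..1} b \<Longrightarrow> unif_tendsto F (\<lambda>s. b) b"
  unfolding unif_tendsto_def by (intro conjI exI[of _ "\<lambda>s. 0"]) auto

lemma unif_tendsto_const_fun:
  assumes "(c \<longlongrightarrow> c0) F"
  shows "unif_tendsto F (\<lambda>s x. c s) (\<lambda>x. c0)"
  unfolding unif_tendsto_def
proof (intro conjI exI[of _ "\<lambda>s. \<bar>c s - c0\<bar>"])
  show "((\<lambda>s. \<bar>c s - c0\<bar>) \<longlongrightarrow> 0) F"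
    using assms by (simp add: tendsto_rabs_zero_iff LIM_zero)
qed auto

lemma unif_tendsto_add:
  assumes A: "unif_tendsto F a a'" and B: "unif_tendsto F b b'"
  shows "unif_tendsto F (\<lambda>s x. a s x + b s x) (\<lambda>x. a' x + b' x)"
proof -
  obtain Ba where Ba: "(Ba \<longlongrightarrow> 0) F" "eventually (\<lambda>s. \<forall>x\<in>{0..1}. \<bar>a s x - a' x\<bar> \<le> Ba s) F"
    using A unfolding unif_tendsto_def by blast
  obtain Bb where Bb: "(Bb \<longlongrightarrow> 0) F" "eventually (\<lambda>s. \<forall>x\<in>{0..1}. \<bar>b s x - b' x\<bar> \<le> Bb s) F"
    using B unfolding unif_tendsto_def by blast
  have "((\<lambda>s. Ba s + Bb s) \<longlongrightarrow> 0 + 0) F" by (intro tendsto_add Ba Bb)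
  moreover have "eventually (\<lambda>s. \<forall>x\<in>{0..1}. \<bar>(a s x + b s x) - (a' x + b' x)\<bar> \<le> Ba s + Bb s) F"
    using eventually_conj[OF Ba(2) Bb(2)] by (rule eventually_mono) (smt (verit))
  moreover have "eventually (\<lambda>s. continuous_on {0..1} (a s) \<and> continuous_on {0..1} (b s)) F"
    using A B unfolding unif_tendsto_def by (auto intro: eventually_conj)
  then have "eventually (\<lambda>s. continuous_on {0..1} (\<lambda>x. a s x + b s x)) F"
    by (rule eventually_mono) (auto intro: continuous_on_add)
  ultimately show ?thesis
    using A B unfolding unif_tendsto_def by (auto intro: continuous_on_add)
qed

lemma unif_tendsto_cmult:
  assumes "unif_tendsto F a a'"
  shows "unif_tendsto F (\<lambda>s x. c * a s x) (\<lambda>x. c * a' x)"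
proof -
  obtain B where B: "(B \<longlongrightarrow> 0) F" "eventually (\<lambda>s. \<forall>x\<in>{0..1}. \<bar>a s x - a' x\<bar> \<le> B s) F"
    using assms unfolding unif_tendsto_def by blast
  have "((\<lambda>s. \<bar>c\<bar> * B s) \<longlongrightarrow> \<bar>c\<bar> * 0) F" by (intro tendsto_mult B tendsto_const)
  moreover have "eventually (\<lambda>s. \<forall>x\<in>{0..1}. \<bar>c * a s x - c * a' x\<bar> \<le> \<bar>c\<bar> * B s) F"
    using B(2) by (rule eventually_mono)
      (simp add: abs_mult right_diff_distrib[symmetric] mult_left_mono)
  moreover have "eventually (\<lambda>s. continuous_on {0..1} (\<lambda>x. c * a s x)) F"
    using assms unfolding unif_tendsto_def by (auto elim!: eventually_mono intro: continuous_intros)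
  ultimately show ?thesis
    using assms unfolding unif_tendsto_def by (auto intro: continuous_intros)
qed

lemma unif_tendsto_diff:
  assumes "unif_tendsto F a a'" "unif_tendsto F b b'"
  shows "unif_tendsto F (\<lambda>s x. a s x - b s x) (\<lambda>x. a' x - b' x)"
  using unif_tendsto_add[OF assms(1) unif_tendsto_cmult[OF assms(2), of "-1"]] by simp

lemma unif_tendsto_mult:
  assumes A: "unif_tendsto F a a'" and B: "unif_tendsto F b b'"
  shows "unif_tendsto F (\<lambda>s x. a s x * b s x) (\<lambda>x. a' x * b' x)"
proof -
  obtain Ba where Ba: "(Ba \<longlongrightarrow> 0) F" "eventually (\<lambda>s. \<forall>x\<in>{0..1}. \<bar>a s x - a' x\<bar> \<le> Ba s) F"
    using A unfolding unif_tendsto_def by blast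
  obtain Bb where Bb: "(Bb \<longlongrightarrow> 0) F" "eventually (\<lambda>s. \<forall>x\<in>{0..1}. \<bar>b s x - b' x\<bar> \<le> Bb s) F"
    using B unfolding unif_tendsto_def by blast
  obtain Ma where Ma: "\<And>x. x \<in> {0..1} \<Longrightarrow> \<bar>a' x\<bar> \<le> Ma"
    using A continuous_on_01_bounded unfolding unif_tendsto_def by blast
  obtain Mb where Mb: "\<And>x. x \<in> {0..1} \<Longrightarrow> \<bar>b' x\<bar> \<le> Mb"
    using B continuous_on_01_bounded unfolding unif_tendsto_def by blast
  have "0 \<le> Ma" using Ma[of 0] by simp
  have "((\<lambda>s. Ba s * (Mb + Bb s) + Ma * Bb s) \<longlongrightarrow> 0 * (Mb + 0) + Ma * 0) F"
    by (intro tendsto_intros Ba Bb)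
  moreover have "eventually (\<lambda>s. \<forall>x\<in>{0..1}.
      \<bar>a s x * b s x - a' x * b' x\<bar> \<le> Ba s * (Mb + Bb s) + Ma * Bb s) F"
    using eventually_conj[OF Ba(2) Bb(2)]
  proof (rule eventually_mono, intro ballI)
    fix s and x :: real assume s: "(\<forall>x\<in>{0..1}. \<bar>a s x - a' x\<bar> \<le> Ba s) \<and> (\<forall>x\<in>{0..1}. \<bar>b s x - b' x\<bar> \<le> Bb s)"
      and x: "x \<in> {0..1}"
    have "\<bar>a s x * b s x - a' x * b' x\<bar> \<le> \<bar>a s x - a' x\<bar> * \<bar>b s x\<bar> + \<bar>a' x\<bar> * \<bar>b s x - b' x\<bar>"
      by (rule abs_mult_diff_le)
    also have "\<dots> \<le> Ba s * (Mb + Bb s) + Ma * Bb s"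
    proof (intro add_mono mult_mono)
      show "\<bar>b s x\<bar> \<le> Mb + Bb s" using s x Mb[OF x] by fastforce
      show "0 \<le> Ba s" using s unif_tendsto_bound_nonneg by blast
    qed (use s x Ma[OF x] \<open>0 \<le> Ma\<close> in auto)
    finally show "\<bar>a s x * b s x - a' x * b' x\<bar> \<le> Ba s * (Mb + Bb s) + Ma * Bb s" .
  qed
  moreover have "eventually (\<lambda>s. continuous_on {0..1} (a s) \<and> continuous_on {0..1} (b s)) F"
    using A B unfolding unif_tendsto_def by (auto intro: eventually_conj)
  then have "eventually (\<lambda>s. continuous_on {0..1} (\<lambda>x. a s x * b s x)) F"
    by (rule eventually_mono) (auto intro: continuous_on_mult)
  ultimately show ?thesis
    using A B unfolding unif_tendsto_def by (auto intro: continuous_on_mult)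
qed

lemma unif_tendsto_indefinite_integral:
  assumes "L1_tendsto F a a'"
  shows "unif_tendsto F (\<lambda>s x. LINT y:{0..x}|lborel. a s y) (\<lambda>x. LINT y:{0..x}|lborel. a' y)"
proof -
  have ia: "integrable lborel01 a'" and ev: "eventually (\<lambda>s. integrable lborel01 (a s)) F"
    using assms by (simp_all add: L1_tendsto_def)
  have "eventually (\<lambda>s. \<forall>x\<in>{0..1}. \<bar>(LINT y:{0..x}|lborel. a s y) - (LINT y:{0..x}|lborel. a' y)\<bar>
      \<le> integral\<^sup>L lborel01 (\<lambda>x. \<bar>a s x - a' x\<bar>)) F"
    using ev
  proof (rule eventually_mono, intro ballI)
    fix s and x :: real assume i: "integrable lborel01 (a s)" and x: "x \<in> {0..1}"
    have "(LINT y:{0..x}|lborel. a s y) - (LINT y:{0..x}|lborel. a' y)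
        = (LINT y:{0..x}|lborel. a s y - a' y)"
      using i ia x by (intro set_integral_diff(2)[symmetric] set_integrable_Icc_01) auto
    also have "\<bar>\<dots>\<bar> \<le> integral\<^sup>L lborel01 (\<lambda>y. \<bar>a s y - a' y\<bar>)"
      using i ia x by (intro abs_indefinite_integral_le) auto
    finally show "\<bar>(LINT y:{0..x}|lborel. a s y) - (LINT y:{0..x}|lborel. a' y)\<bar>
        \<le> integral\<^sup>L lborel01 (\<lambda>x. \<bar>a s x - a' x\<bar>)" .
  qed
  moreover have "eventually (\<lambda>s. continuous_on {0..1} (\<lambda>x. LINT y:{0..x}|lborel. a s y)) F"
    using ev by (rule eventually_mono) (rule continuous_on_indefinite_integral_01)
  ultimately show ?thesis
    using assms continuous_on_indefinite_integral_01[OF ia]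
    unfolding unif_tendsto_def L1_tendsto_def by blast
qed

lemma unif_tendsto_cong:
  assumes "unif_tendsto F a b" "eventually (\<lambda>s. \<forall>x\<in>{0..1}. a s x = a2 s x) F"
    "\<And>x. x \<in> {0..1} \<Longrightarrow> b x = b2 x"
  shows "unif_tendsto F a2 b2"
proof -
  obtain B where B: "(B \<longlongrightarrow> 0) F" "eventually (\<lambda>s. \<forall>x\<in>{0..1}. \<bar>a s x - b x\<bar> \<le> B s) F"
    using assms(1) unfolding unif_tendsto_def by blast
  have "eventually (\<lambda>s. \<forall>x\<in>{0..1}. \<bar>a2 s x - b2 x\<bar> \<le> B s) F"
    using eventually_conj[OF B(2) assms(2)] by (rule eventually_mono) (use assms(3) in auto)
  moreover have "eventually (\<lambda>s. continuous_on {0..1} (a2 s)) F"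
    using eventually_conj[OF conjunct1[OF conjunct2[OF assms(1)[unfolded unif_tendsto_def]]] assms(2)]
    by (rule eventually_mono) (auto intro: continuous_on_cong[THEN iffD1])
  moreover have "continuous_on {0..1} b2"
    using assms(1) unfolding unif_tendsto_def by (auto intro: continuous_on_eq assms(3))
  ultimately show ?thesis using B(1) unfolding unif_tendsto_def by blast
qed

definition diff_quot :: "real \<Rightarrow> (real \<Rightarrow> real \<Rightarrow> real) \<Rightarrow> real \<Rightarrow> real \<Rightarrow> real" where
  "diff_quot t u s x = (u s x - u t x) / (s - t)"

lemma diff_quot_mult:
  "diff_quot t (\<lambda>s x. a s x * b s x) s x = diff_quot t a s x * b s x + a t x * diff_quot t b s x"
proof -
  have "(p - p') / d * q + p' * ((q - q') / d) = ((p - p') * q + p' * (q - q')) / d"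
    for p p' q q' d :: real
    by (simp add: add_divide_distrib)
  then show ?thesis
    unfolding diff_quot_def by (simp add: algebra_simps)
qed

lemma diff_quot_add:
  "diff_quot t (\<lambda>s x. a s x + c * b s x) = (\<lambda>s x. diff_quot t a s x + c * diff_quot t b s x)"
  unfolding diff_quot_def by (simp add: algebra_simps add_divide_distrib diff_divide_distrib)

lemma L2_tendsto_diff_quot:
  assumes "has_L2_derivative u v t I" "sqint01 v" "eventually (\<lambda>s. sqint01 (u s)) (at t within I)"
    "sqint01 (u t)"
  shows "L2_tendsto (at t within I) (diff_quot t u) v"
proof -
  have "((\<lambda>s. sqrt (integral\<^sup>L lborel01 (\<lambda>x. (diff_quot t u s x - v x)^2))) \<longlongrightarrow> 0) (at t within I)"
    using assms(1) unfolding has_L2_derivative_def l2dist01_def set_integral_01_eq diff_quot_def .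
  then have "((\<lambda>s. (sqrt (integral\<^sup>L lborel01 (\<lambda>x. (diff_quot t u s x - v x)^2)))^2) \<longlongrightarrow> 0^2)
      (at t within I)"
    by (intro tendsto_power)
  moreover have "eventually (\<lambda>s. sqint01 (diff_quot t u s)) (at t within I)"
    using assms(3) by (rule eventually_mono) (use assms(4) in \<open>auto simp: diff_quot_def[abs_def]\<close>)
  ultimately show ?thesis using assms(2) unfolding L2_tendsto_def by simp
qed

lemma L2_tendsto_if_diff_quot:
  assumes D: "L2_tendsto F (diff_quot t u) u'" and "sqint01 (u t)"
    and "eventually (\<lambda>s. s \<noteq> t) F" "((\<lambda>s. s) \<longlongrightarrow> t) F"
  shows "L2_tendsto F u (u t)"
proof -
  have su': "sqint01 u'" using D by (simp add: L2_tendsto_def)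
  define d where "d s = integral\<^sup>L lborel01 (\<lambda>x. (diff_quot t u s x - u' x)^2)" for s
  define C where "C = integral\<^sup>L lborel01 (\<lambda>x. (u' x)^2)"
  have ev: "eventually (\<lambda>s. s \<noteq> t \<and> sqint01 (diff_quot t u s)) F"
    using assms(3) D unfolding L2_tendsto_def by (auto intro: eventually_conj)
  have u_eq: "u s = (\<lambda>x. u t x + (s - t) * diff_quot t u s x)" if "s \<noteq> t" for s
    using that by (auto simp: diff_quot_def)
  have "eventually (\<lambda>s. sqint01 (u s)) F"
    using ev by (rule eventually_mono) (use assms(2) u_eq in auto)
  moreover have "eventually (\<lambda>s. integral\<^sup>L lborel01 (\<lambda>x. (u s x - u t x)^2)
      \<le> (s - t)^2 * (2 * d s + 2 * C)) F"
    using ev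
  proof (rule eventually_mono)
    fix s assume s: "s \<noteq> t \<and> sqint01 (diff_quot t u s)"
    have "integral\<^sup>L lborel01 (\<lambda>x. (u s x - u t x)^2)
        = (s - t)^2 * integral\<^sup>L lborel01 (\<lambda>x. (diff_quot t u s x)^2)"
      using s by (simp add: diff_quot_def power_divide)
    also have "\<dots> \<le> (s - t)^2 * (2 * d s + 2 * C)"
      using integral_square_le_diff[of "diff_quot t u s" u'] s su' unfolding d_def C_def
      by (intro mult_left_mono) auto
    finally show "integral\<^sup>L lborel01 (\<lambda>x. (u s x - u t x)^2) \<le> (s - t)^2 * (2 * d s + 2 * C)" .
  qed
  moreover have "((\<lambda>s. (s - t)^2 * (2 * d s + 2 * C)) \<longlongrightarrow> (t - t)^2 * (2 * 0 + 2 * C)) F"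
    using D assms(4) unfolding L2_tendsto_def d_def by (intro tendsto_intros) auto
  ultimately show ?thesis
    using assms(2) unfolding L2_tendsto_def
    by (auto intro: tendsto_sandwich[OF _ _ tendsto_const] simp: always_eventually)
qed

lemma unif_tendsto_if_diff_quot:
  assumes D: "unif_tendsto F (diff_quot t g) g'" and "continuous_on {0..1} (g t)"
    and "eventually (\<lambda>s. s \<noteq> t) F" "((\<lambda>s. s) \<longlongrightarrow> t) F"
  shows "unif_tendsto F g (g t)"
proof -
  obtain B where B: "(B \<longlongrightarrow> 0) F"
    "eventually (\<lambda>s. \<forall>x\<in>{0..1}. \<bar>diff_quot t g s x - g' x\<bar> \<le> B s) F"
    using D unfolding unif_tendsto_def by blast
  obtain M where M: "\<And>x. x \<in> {0..1} \<Longrightarrow> \<bar>g' x\<bar> \<le> M"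
    using D continuous_on_01_bounded unfolding unif_tendsto_def by blast
  have g_eq: "g s = (\<lambda>x. g t x + (s - t) * diff_quot t g s x)" if "s \<noteq> t" for s
    using that by (auto simp: diff_quot_def)
  have "eventually (\<lambda>s. continuous_on {0..1} (g s)) F"
    using eventually_conj[OF assms(3) conjunct1[OF conjunct2[OF D[unfolded unif_tendsto_def]]]]
    by (rule eventually_mono) (use g_eq assms(2) in \<open>auto intro!: continuous_intros\<close>)
  moreover have "eventually (\<lambda>s. \<forall>x\<in>{0..1}. \<bar>g s x - g t x\<bar> \<le> \<bar>s - t\<bar> * (M + B s)) F"
    using eventually_conj[OF assms(3) B(2)]
  proof (rule eventually_mono, intro ballI)
    fix s and x :: real
    assume s: "s \<noteq> t \<and> (\<forall>x\<in>{0..1}. \<bar>diff_quot t g s x - g' x\<bar> \<le> B s)" and x: "x \<in> {0..1}"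
    have "\<bar>g s x - g t x\<bar> = \<bar>s - t\<bar> * \<bar>diff_quot t g s x\<bar>"
      using s by (simp add: diff_quot_def abs_divide)
    also have "\<dots> \<le> \<bar>s - t\<bar> * (M + B s)"
      using s x M[OF x] by (intro mult_left_mono) fastforce+
    finally show "\<bar>g s x - g t x\<bar> \<le> \<bar>s - t\<bar> * (M + B s)" .
  qed
  moreover have "((\<lambda>s. \<bar>s - t\<bar> * (M + B s)) \<longlongrightarrow> \<bar>t - t\<bar> * (M + 0)) F"
    by (intro tendsto_intros assms(4) B(1))
  ultimately show ?thesis using assms(2) unfolding unif_tendsto_def by auto
qed

lemma L1_tendsto_diff_quot_mult:
  assumes "L2_tendsto F (diff_quot t a) a'" "L2_tendsto F (diff_quot t b) b'"
    and "sqint01 (a t)" "sqint01 (b t)" "eventually (\<lambda>s. s \<noteq> t) F" "((\<lambda>s. s) \<longlongrightarrow> t) F"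
  shows "L1_tendsto F (diff_quot t (\<lambda>s x. a s x * b s x)) (\<lambda>x. a' x * b t x + a t x * b' x)"
  unfolding diff_quot_mult
  by (rule L1_tendsto_add[OF L1_tendsto_mult[OF assms(1) L2_tendsto_if_diff_quot[OF assms(2,4,5,6)]]
        L1_tendsto_mult[OF L2_tendsto_const[OF assms(3)] assms(2)]])

lemma L1_tendsto_diff_quot_mult_unif:
  assumes "L1_tendsto F (diff_quot t a) a'" "unif_tendsto F (diff_quot t b) b'"
    and "integrable lborel01 (a t)" "continuous_on {0..1} (b t)"
    and "eventually (\<lambda>s. s \<noteq> t) F" "((\<lambda>s. s) \<longlongrightarrow> t) F"
  shows "L1_tendsto F (diff_quot t (\<lambda>s x. a s x * b s x)) (\<lambda>x. a' x * b t x + a t x * b' x)"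
proof -
  have "L1_tendsto F (\<lambda>s x. b s x * diff_quot t a s x + diff_quot t b s x * a t x)
      (\<lambda>x. b t x * a' x + b' x * a t x)"
    by (intro L1_tendsto_add L1_tendsto_unif_mult[OF unif_tendsto_if_diff_quot[OF assms(2,4,5,6)] assms(1)]
        L1_tendsto_unif_mult[OF assms(2) L1_tendsto_const[OF assms(3)]])
  then show ?thesis
    unfolding diff_quot_mult by (simp add: mult.commute)
qed

lemma unif_tendsto_diff_quot_mult:
  assumes "unif_tendsto F (diff_quot t a) a'" "unif_tendsto F (diff_quot t b) b'"
    and "continuous_on {0..1} (a t)" "continuous_on {0..1} (b t)"
    and "eventually (\<lambda>s. s \<noteq> t) F" "((\<lambda>s. s) \<longlongrightarrow> t) F"
  shows "unif_tendsto F (diff_quot t (\<lambda>s x. a s x * b s x)) (\<lambda>x. a' x * b t x + a t x * b' x)"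
  unfolding diff_quot_mult
  by (rule unif_tendsto_add[OF unif_tendsto_mult[OF assms(1) unif_tendsto_if_diff_quot[OF assms(2,4,5,6)]]
        unif_tendsto_mult[OF unif_tendsto_const[OF assms(3)] assms(2)]])

lemma has_real_derivative_integral_L1:
  assumes "L1_tendsto (at t within I) (diff_quot t u) u'"
    and "eventually (\<lambda>s. integrable lborel01 (u s)) (at t within I)" "integrable lborel01 (u t)"
  shows "((\<lambda>s. integral\<^sup>L lborel01 (u s)) has_real_derivative integral\<^sup>L lborel01 u') (at t within I)"
  unfolding has_field_derivative_iff
proof (rule Lim_transform_eventually[OF L1_tendsto_integral[OF assms(1)]])
  show "eventually (\<lambda>s. integral\<^sup>L lborel01 (diff_quot t u s)
      = (integral\<^sup>L lborel01 (u s) - integral\<^sup>L lborel01 (u t)) / (s - t)) (at t within I)"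
    using assms(2) by (rule eventually_mono) (use assms(3) in \<open>simp add: diff_quot_def[abs_def]\<close>)
qed

subsection \<open>Primitives of integrable functions on [0,1]\<close>

text \<open>Absolute continuity on [0,1], with \<open>u'\<close> as an integrable derivative, stated without derivatives.\<close>
definition primitive01 :: "(real \<Rightarrow> real) \<Rightarrow> (real \<Rightarrow> real) \<Rightarrow> bool" where
  "primitive01 u u' \<longleftrightarrow> integrable lborel01 u' \<and>
     (\<forall>x\<in>{0..1}. u x = u 0 + (LINT y:{0..x}|lborel. u' y))"

lemma primitive01_indefinite_integral:
  "integrable lborel01 g \<Longrightarrow> primitive01 (\<lambda>x. c + (LINT y:{0..x}|lborel. g y)) g"
  unfolding primitive01_def using set_integral_point_0[of g] by auto

lemma primitive01_integrable: "primitive01 u u' \<Longrightarrow> integrable lborel01 u'"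
  by (simp add: primitive01_def)

lemma primitive01_eq: "primitive01 u u' \<Longrightarrow> x \<in> {0..1} \<Longrightarrow> u x = u 0 + (LINT y:{0..x}|lborel. u' y)"
  unfolding primitive01_def by blast

lemma primitive01_continuous:
  assumes "primitive01 u u'"
  shows "continuous_on {0..1} u"
proof -
  have "continuous_on {0..1} (\<lambda>x. u 0 + (LINT y:{0..x}|lborel. u' y))"
    using primitive01_integrable[OF assms] by (intro continuous_intros continuous_on_indefinite_integral_01)
  then show ?thesis
    by (rule continuous_on_eq) (simp add: primitive01_eq[OF assms, symmetric])
qed

lemma set_integral_Icc_combine_01:
  fixes g :: "real \<Rightarrow> real"
  assumes "integrable lborel01 g" "0 \<le> a" "a \<le> b" "b \<le> c" "c \<le> 1"
  shows "(LINT y:{a..b}|lborel. g y) + (LINT y:{b..c}|lborel. g y) = (LINT y:{a..c}|lborel. g y)"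
  using Henstock_Kurzweil_Integration.integral_combine[of a b c g]
    set_integral_Icc_eq_HK[OF assms(1)] assms by auto

lemma primitive01_integral_Icc:
  assumes "primitive01 u u'" "0 \<le> a" "a \<le> b" "b \<le> 1"
  shows "(LINT y:{a..b}|lborel. u' y) = u b - u a"
  using set_integral_Icc_combine_01[OF primitive01_integrable[OF assms(1)], of 0 a b]
    primitive01_eq[OF assms(1), of a] primitive01_eq[OF assms(1), of b] assms
  by auto

lemma primitive01_integral: "primitive01 u u' \<Longrightarrow> integral\<^sup>L lborel01 u' = u 1 - u 0"
  using primitive01_integral_Icc[of u u' 0 1] by (simp add: set_integral_01_eq)

lemma primitive01_cong:
  assumes "primitive01 u u'" "\<And>x. x \<in> {0..1} \<Longrightarrow> u x = v x" "\<And>x. x \<in> {0..1} \<Longrightarrow> u' x = v' x"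
  shows "primitive01 v v'"
  unfolding primitive01_def
proof (intro conjI ballI)
  show "integrable lborel01 v'"
    using primitive01_integrable[OF assms(1)] assms(3)
    by (subst Bochner_Integration.integrable_cong[OF refl, of _ _ u']) auto
  fix x :: real assume x: "x \<in> {0..1}"
  have "(LINT y:{0..x}|lborel. v' y) = (LINT y:{0..x}|lborel. u' y)"
    using x assms(3) by (intro set_lebesgue_integral_cong) auto
  then show "v x = v 0 + (LINT y:{0..x}|lborel. v' y)"
    using primitive01_eq[OF assms(1) x] assms(2)[OF x] assms(2)[of 0] by simp
qed

lemma primitive01_const: "primitive01 (\<lambda>x. c) (\<lambda>x. 0)"
  unfolding primitive01_def by simp

lemma primitive01_add:
  assumes "primitive01 u u'" "primitive01 v v'"
  shows "primitive01 (\<lambda>x. u x + v x) (\<lambda>x. u' x + v' x)"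
  unfolding primitive01_def
proof (intro conjI ballI)
  have iu: "integrable lborel01 u'" and iv: "integrable lborel01 v'"
    using assms by (auto simp: primitive01_def)
  then show "integrable lborel01 (\<lambda>x. u' x + v' x)" by simp
  fix x :: real assume x: "x \<in> {0..1}"
  have "(LINT y:{0..x}|lborel. u' y + v' y) = (LINT y:{0..x}|lborel. u' y) + (LINT y:{0..x}|lborel. v' y)"
    using iu iv x by (intro set_integral_add set_integrable_Icc_01) auto
  then show "u x + v x = u 0 + v 0 + (LINT y:{0..x}|lborel. u' y + v' y)"
    using primitive01_eq[OF assms(1) x] primitive01_eq[OF assms(2) x] by simp
qed

lemma primitive01_cmult:
  assumes "primitive01 u u'"
  shows "primitive01 (\<lambda>x. c * u x) (\<lambda>x. c * u' x)"
  unfolding primitive01_def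
proof (intro conjI ballI)
  show "integrable lborel01 (\<lambda>x. c * u' x)"
    using primitive01_integrable[OF assms] by simp
  show "c * u x = c * u 0 + (LINT y:{0..x}|lborel. c * u' y)" if "x \<in> {0..1}" for x
    using primitive01_eq[OF assms that] by (simp add: distrib_left)
qed

lemma primitive01_diff:
  assumes "primitive01 u u'" "primitive01 v v'"
  shows "primitive01 (\<lambda>x. u x - v x) (\<lambda>x. u' x - v' x)"
  using primitive01_add[OF assms(1) primitive01_cmult[OF assms(2), of "-1"]] by simp

lemma primitive01_sum:
  assumes "\<And>n. n \<in> A \<Longrightarrow> primitive01 (u n) (u' n)"
  shows "primitive01 (\<lambda>x. \<Sum>n\<in>A. u n x) (\<lambda>x. \<Sum>n\<in>A. u' n x)"
  using assms
proof (induction A rule: infinite_finite_induct)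
  case (insert a A)
  then show ?case by (simp add: primitive01_add)
qed (simp_all add: primitive01_const)

lemma indefinite_integral_dominated_convergence:
  fixes u :: "nat \<Rightarrow> real \<Rightarrow> real"
  assumes [measurable]: "\<And>N. u N \<in> borel_measurable lborel01"
    and lim: "\<And>y. y \<in> {0..1} \<Longrightarrow> (\<lambda>N. u N y) \<longlonglongrightarrow> w y"
    and bound: "\<And>N y. y \<in> {0..1} \<Longrightarrow> \<bar>u N y\<bar> \<le> h y" and h: "integrable lborel01 h"
  shows "integrable lborel01 w"
    and "x \<in> {0..1} \<Longrightarrow> (\<lambda>N. LINT y:{0..x}|lborel. u N y) \<longlonglongrightarrow> (LINT y:{0..x}|lborel. w y)"
proof -
  have [measurable]: "w \<in> borel_measurable lborel01"
    by (rule borel_measurable_LIMSEQ_real[where u=u]) (use lim in auto)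
  have "\<bar>w y\<bar> \<le> h y" if "y \<in> {0..1}" for y
    by (rule LIMSEQ_le_const2[OF tendsto_rabs[OF lim[OF that]]]) (use bound[OF that] in auto)
  then show "integrable lborel01 w"
    by (intro Bochner_Integration.integrable_bound[OF h] AE_I2) force+
  assume x: "x \<in> {0..1}"
  have "(\<lambda>N. integral\<^sup>L lborel01 (\<lambda>y. indicator {0..x} y * u N y))
      \<longlonglongrightarrow> integral\<^sup>L lborel01 (\<lambda>y. indicator {0..x} y * w y)"
  proof (rule integral_dominated_convergence[where w=h])
    show "AE y in lborel01. (\<lambda>N. indicator {0..x} y * u N y) \<longlonglongrightarrow> indicator {0..x} y * w y"
      using lim by (intro AE_I2 tendsto_mult tendsto_const) auto
    show "AE y in lborel01. norm (indicator {0..x} y * u N y) \<le> h y" for N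
    proof (rule AE_I2)
      fix y assume "y \<in> space lborel01"
      then have "\<bar>u N y\<bar> \<le> h y" using bound by simp
      moreover have "0 \<le> h y" using calculation by linarith
      ultimately show "norm (indicator {0..x} y * u N y) \<le> h y"
        by (simp add: indicator_def abs_mult)
    qed
  qed (use h in simp_all)
  then show "(\<lambda>N. LINT y:{0..x}|lborel. u N y) \<longlonglongrightarrow> (LINT y:{0..x}|lborel. w y)"
    using x by (simp add: set_integral_Icc_eq_indicator)
qed

lemma primitive01_limit:
  assumes prim: "\<And>N. primitive01 (u N) (u' N)"
    and lim: "\<And>x. x \<in> {0..1} \<Longrightarrow> (\<lambda>N. u N x) \<longlonglongrightarrow> w x"
    and lim': "\<And>x. x \<in> {0..1} \<Longrightarrow> (\<lambda>N. u' N x) \<longlonglongrightarrow> w' x"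
    and bound: "\<And>N x. x \<in> {0..1} \<Longrightarrow> \<bar>u' N x\<bar> \<le> h x" and h: "integrable lborel01 h"
  shows "primitive01 w w'"
  unfolding primitive01_def
proof (intro conjI ballI)
  have meas: "u' N \<in> borel_measurable lborel01" for N
    using primitive01_integrable[OF prim] by auto
  show "integrable lborel01 w'"
    by (rule indefinite_integral_dominated_convergence(1)[where u=u' and h=h])
      (use meas lim' bound h in auto)
  fix x :: real assume x: "x \<in> {0..1}"
  have "(\<lambda>N. LINT y:{0..x}|lborel. u' N y) \<longlonglongrightarrow> (LINT y:{0..x}|lborel. w' y)"
    by (rule indefinite_integral_dominated_convergence(2)[where u=u' and h=h])
      (use meas lim' bound h x in auto)
  then have "(\<lambda>N. u N x - u N 0) \<longlonglongrightarrow> (LINT y:{0..x}|lborel. w' y)"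
    using primitive01_eq[OF prim x] by simp
  moreover have "(\<lambda>N. u N x - u N 0) \<longlonglongrightarrow> w x - w 0"
    using lim x by (intro tendsto_diff) auto
  ultimately have "w x - w 0 = (LINT y:{0..x}|lborel. w' y)"
    by (rule LIMSEQ_unique[rotated])
  then show "w x = w 0 + (LINT y:{0..x}|lborel. w' y)" by simp
qed

interpretation lborel01_pair: pair_sigma_finite lborel01 lborel01
  by (rule pair_sigma_finite.intro) (simp_all add: lborel01.sigma_finite_measure_axioms)

lemma Fubini_lborel01:
  fixes k :: "real \<Rightarrow> real \<Rightarrow> real"
  assumes km: "case_prod k \<in> borel_measurable (lborel01 \<Otimes>\<^sub>M lborel01)"
    and ia: "integrable lborel01 a" and ib: "integrable lborel01 b"
    and bound: "\<And>x y. x \<in> {0..1} \<Longrightarrow> y \<in> {0..1} \<Longrightarrow> \<bar>k x y\<bar> \<le> \<bar>a x\<bar> * \<bar>b y\<bar>"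
  shows "integral\<^sup>L lborel01 (\<lambda>y. integral\<^sup>L lborel01 (\<lambda>x. k x y))
      = integral\<^sup>L lborel01 (\<lambda>x. integral\<^sup>L lborel01 (\<lambda>y. k x y))"
    and "integrable lborel01 (\<lambda>x. integral\<^sup>L lborel01 (\<lambda>y. k x y))"
proof -
  have iy: "integrable lborel01 (\<lambda>y. k x y)" if x: "x \<in> {0..1}" for x
  proof (rule Bochner_Integration.integrable_bound)
    show "integrable lborel01 (\<lambda>y. \<bar>a x\<bar> * \<bar>b y\<bar>)" using ib by simp
    show "(\<lambda>y. k x y) \<in> borel_measurable lborel01" using measurable_Pair2[OF km, of x] x by simp
  qed (use bound x in auto)
  have "integrable (lborel01 \<Otimes>\<^sub>M lborel01) (case_prod k)"
  proof (rule lborel01_pair.Fubini_integrable[OF km])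
    show "integrable lborel01 (\<lambda>x. \<integral>y. norm (case_prod k (x, y)) \<partial>lborel01)"
    proof (rule Bochner_Integration.integrable_bound)
      show "integrable lborel01 (\<lambda>x. \<bar>a x\<bar> * integral\<^sup>L lborel01 (\<lambda>y. \<bar>b y\<bar>))" using ia by simp
      show "(\<lambda>x. \<integral>y. norm (case_prod k (x, y)) \<partial>lborel01) \<in> borel_measurable lborel01"
        using km by measurable
      show "AE x in lborel01. norm (\<integral>y. norm (case_prod k (x, y)) \<partial>lborel01)
          \<le> norm (\<bar>a x\<bar> * integral\<^sup>L lborel01 (\<lambda>y. \<bar>b y\<bar>))"
      proof (rule AE_I2)
        fix x assume "x \<in> space lborel01"
        then have "(\<integral>y. norm (k x y) \<partial>lborel01) \<le> integral\<^sup>L lborel01 (\<lambda>y. \<bar>a x\<bar> * \<bar>b y\<bar>)"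
          using iy ib bound by (intro integral_mono) auto
        then show "norm (\<integral>y. norm (case_prod k (x, y)) \<partial>lborel01)
            \<le> norm (\<bar>a x\<bar> * integral\<^sup>L lborel01 (\<lambda>y. \<bar>b y\<bar>))"
          by simp
      qed
    qed
  qed (use iy in \<open>auto intro: AE_I2\<close>)
  then show "integral\<^sup>L lborel01 (\<lambda>y. integral\<^sup>L lborel01 (\<lambda>x. k x y))
      = integral\<^sup>L lborel01 (\<lambda>x. integral\<^sup>L lborel01 (\<lambda>y. k x y))"
    and "integrable lborel01 (\<lambda>x. integral\<^sup>L lborel01 (\<lambda>y. k x y))"
    by (simp_all add: lborel01_pair.Fubini_integral lborel01_pair.integrable_fst)
qed

lemma indicator_indefinite_integral_split:
  fixes g :: "real \<Rightarrow> real"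
  assumes g: "integrable lborel01 g" and s: "s \<in> {0..1}" and x: "x \<in> {0..1}"
  shows "indicator {0..x} s * (LINT r:{0..s}|lborel. g r) + integral\<^sup>L lborel01 (\<lambda>r. indicator {s..x} r * g r)
    = indicator {0..x} s * (LINT r:{0..x}|lborel. g r)"
proof (cases "s \<le> x")
  case True
  then show ?thesis
    using set_integral_Icc_combine_01[OF g, of 0 s x] set_integral_Icc_eq_indicator[of s x g] s x
    by simp
next
  case False
  then show ?thesis by (simp add: indicator_def)
qed

lemma Fubini_upper_triangle:
  fixes f g :: "real \<Rightarrow> real"
  assumes f: "integrable lborel01 f" and g: "integrable lborel01 g"
  shows "integral\<^sup>L lborel01 (\<lambda>r. indicator {0..x} r * ((LINT s:{0..r}|lborel. f s) * g r))
      = integral\<^sup>L lborel01 (\<lambda>s. f s * integral\<^sup>L lborel01 (\<lambda>r. indicator {s..x} r * g r))"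
    and "integrable lborel01 (\<lambda>s. f s * integral\<^sup>L lborel01 (\<lambda>r. indicator {s..x} r * g r))"
proof -
  have [measurable]: "f \<in> borel_measurable lborel01" "g \<in> borel_measurable lborel01"
    using f g by auto
  define k where "k s r = indicator {0..x} r * indicator {0..r} s * (f s * g r)" for s r :: real
  have "(\<lambda>p. of_bool (0 \<le> fst p \<and> fst p \<le> snd p \<and> snd p \<le> x) * (f (fst p) * g (snd p)) :: real)
      \<in> borel_measurable (lborel01 \<Otimes>\<^sub>M lborel01)"
    by measurable
  then have km: "case_prod k \<in> borel_measurable (lborel01 \<Otimes>\<^sub>M lborel01)"
    by (rule measurable_cong[THEN iffD1, rotated]) (auto simp: k_def indicator_def space_pair_measure)
  have "\<bar>k s r\<bar> \<le> \<bar>f s\<bar> * \<bar>g r\<bar>" for s r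
    by (simp add: k_def indicator_def abs_mult)
  note Fub = Fubini_lborel01[OF km f g this]
  have inner: "integral\<^sup>L lborel01 (\<lambda>r. k s r)
      = f s * integral\<^sup>L lborel01 (\<lambda>r. indicator {s..x} r * g r)" if "s \<in> space lborel01" for s
  proof -
    have "(\<lambda>r. k s r) = (\<lambda>r. f s * (indicator {s..x} r * g r))"
      using that by (auto simp: k_def indicator_def)
    then show ?thesis by simp
  qed
  have "integral\<^sup>L lborel01 (\<lambda>r. indicator {0..x} r * ((LINT s:{0..r}|lborel. f s) * g r))
      = integral\<^sup>L lborel01 (\<lambda>r. integral\<^sup>L lborel01 (\<lambda>s. k s r))"
  proof (rule Bochner_Integration.integral_cong[OF refl])
    fix r assume "r \<in> space lborel01"
    moreover have "(\<lambda>s. k s r) = (\<lambda>s. (indicator {0..x} r * g r) * (indicator {0..r} s * f s))"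
      by (auto simp: k_def)
    ultimately show "indicator {0..x} r * ((LINT s:{0..r}|lborel. f s) * g r)
        = integral\<^sup>L lborel01 (\<lambda>s. k s r)"
      using set_integral_Icc_eq_indicator[of 0 r f] by simp
  qed
  also have "\<dots> = integral\<^sup>L lborel01 (\<lambda>s. f s * integral\<^sup>L lborel01 (\<lambda>r. indicator {s..x} r * g r))"
    unfolding Fub(1) using inner by (auto intro: Bochner_Integration.integral_cong)
  finally show "integral\<^sup>L lborel01 (\<lambda>r. indicator {0..x} r * ((LINT s:{0..r}|lborel. f s) * g r))
      = integral\<^sup>L lborel01 (\<lambda>s. f s * integral\<^sup>L lborel01 (\<lambda>r. indicator {s..x} r * g r))" .
  show "integrable lborel01 (\<lambda>s. f s * integral\<^sup>L lborel01 (\<lambda>r. indicator {s..x} r * g r))"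
    using Fub(2) inner by (subst Bochner_Integration.integrable_cong[OF refl]) auto
qed

lemma indefinite_integral_product:
  fixes f g :: "real \<Rightarrow> real"
  assumes f: "integrable lborel01 f" and g: "integrable lborel01 g" and x: "x \<in> {0..1}"
  defines "F \<equiv> \<lambda>y. LINT s:{0..y}|lborel. f s" and "G \<equiv> \<lambda>y. LINT r:{0..y}|lborel. g r"
  shows "(LINT y:{0..x}|lborel. f y * G y + F y * g y) = F x * G x"
proof -
  let ?I = "\<lambda>s. f s * integral\<^sup>L lborel01 (\<lambda>r. indicator {s..x} r * g r)"
  have ifG: "integrable lborel01 (\<lambda>y. indicator {0..x} y * (f y * G y))"
    using integrable_continuous_on_mult[OF continuous_on_indefinite_integral_01[OF g] f]
    unfolding G_def by (intro integrable_indicator_mult) (simp add: mult.commute)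
  have "integrable lborel01 (\<lambda>y. indicator {0..x} y * (F y * g y))"
    using integrable_continuous_on_mult[OF continuous_on_indefinite_integral_01[OF f] g]
    unfolding F_def by (rule integrable_indicator_mult)
  then have "(LINT y:{0..x}|lborel. f y * G y + F y * g y)
      = integral\<^sup>L lborel01 (\<lambda>y. indicator {0..x} y * (f y * G y))
      + integral\<^sup>L lborel01 (\<lambda>r. indicator {0..x} r * (F r * g r))"
    using set_integral_Icc_eq_indicator[of 0 x] x ifG by (simp add: distrib_left)
  also have "\<dots> = integral\<^sup>L lborel01 (\<lambda>s. indicator {0..x} s * (f s * G s) + ?I s)"
    using Fubini_upper_triangle[OF f g, of x] ifG unfolding F_def by simp
  also have "\<dots> = integral\<^sup>L lborel01 (\<lambda>s. indicator {0..x} s * f s * G x)"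
  proof (rule Bochner_Integration.integral_cong[OF refl])
    fix s assume "s \<in> space lborel01"
    then show "indicator {0..x} s * (f s * G s) + ?I s = indicator {0..x} s * f s * G x"
      using indicator_indefinite_integral_split[OF g _ x, of s] unfolding G_def
      by (simp add: algebra_simps) (metis distrib_left mult.assoc)
  qed
  also have "\<dots> = F x * G x"
    using set_integral_Icc_eq_indicator[of 0 x f] x unfolding F_def by (simp add: mult_ac)
  finally show ?thesis .
qed

lemma primitive01_mult:
  assumes U: "primitive01 u u'" and V: "primitive01 v v'"
  shows "primitive01 (\<lambda>x. u x * v x) (\<lambda>x. u' x * v x + u x * v' x)"
  unfolding primitive01_def
proof (intro conjI ballI)
  have iu: "integrable lborel01 u'" and iv: "integrable lborel01 v'"
    using U V by (auto simp: primitive01_def)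
  have cu: "continuous_on {0..1} u" and cv: "continuous_on {0..1} v"
    using U V by (auto intro: primitive01_continuous)
  define Iu where "Iu x = (LINT y:{0..x}|lborel. u' y)" for x
  define Iv where "Iv x = (LINT y:{0..x}|lborel. v' y)" for x
  have i1: "integrable lborel01 (\<lambda>x. u' x * v x)"
    using integrable_continuous_on_mult[OF cv iu] by (simp add: mult.commute)
  have i2: "integrable lborel01 (\<lambda>x. u x * v' x)"
    using integrable_continuous_on_mult[OF cu iv] .
  then show "integrable lborel01 (\<lambda>x. u' x * v x + u x * v' x)" using i1 by simp
  have i3: "integrable lborel01 (\<lambda>x. u' x * Iv x + Iu x * v' x)"
    using integrable_continuous_on_mult[OF continuous_on_indefinite_integral_01[OF iv] iu]
      integrable_continuous_on_mult[OF continuous_on_indefinite_integral_01[OF iu] iv]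
    unfolding Iu_def Iv_def by (simp add: mult.commute)
  fix x :: real assume x: "x \<in> {0..1}"
  have "(LINT y:{0..x}|lborel. u' y * v y + u y * v' y)
      = (LINT y:{0..x}|lborel. v 0 * u' y + u 0 * v' y + (u' y * Iv y + Iu y * v' y))"
  proof (rule set_lebesgue_integral_cong[OF _ allI[OF impI]])
    fix y assume "y \<in> {0..x}"
    then have y: "y \<in> {0..1}" using x by auto
    show "u' y * v y + u y * v' y = v 0 * u' y + u 0 * v' y + (u' y * Iv y + Iu y * v' y)"
      using primitive01_eq[OF U y] primitive01_eq[OF V y] unfolding Iu_def Iv_def
      by (simp add: algebra_simps)
  qed simp
  also have "\<dots> = v 0 * Iu x + u 0 * Iv x + (LINT y:{0..x}|lborel. u' y * Iv y + Iu y * v' y)"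
    using x iu iv i3 unfolding Iu_def Iv_def
    by (simp add: set_integral_add set_integral_mult_right set_integrable_Icc_01
        set_integrable_mult_right)
  also have "(LINT y:{0..x}|lborel. u' y * Iv y + Iu y * v' y) = Iu x * Iv x"
    using indefinite_integral_product[OF iu iv x] unfolding Iu_def Iv_def .
  finally show "u x * v x = u 0 * v 0 + (LINT y:{0..x}|lborel. u' y * v y + u y * v' y)"
    using primitive01_eq[OF U x] primitive01_eq[OF V x] unfolding Iu_def Iv_def
    by (simp add: algebra_simps)
qed

lemma primitive01_power:
  assumes "primitive01 u u'"
  shows "primitive01 (\<lambda>x. u x ^ Suc n) (\<lambda>x. real (Suc n) * u x ^ n * u' x)"
proof (induction n)
  case 0
  show ?case by (rule primitive01_cong[OF assms]) auto
next
  case (Suc n)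
  from primitive01_mult[OF Suc assms] show ?case
    by (rule primitive01_cong) (auto simp: algebra_simps)
qed

lemma abs_exp_partial_sum_le: "\<bar>\<Sum>n<N. a ^ n / fact n\<bar> \<le> exp \<bar>a :: real\<bar>"
proof -
  have S: "summable (\<lambda>n. \<bar>a\<bar> ^ n / fact n)" and E: "(\<Sum>n. \<bar>a\<bar> ^ n / fact n) = exp \<bar>a\<bar>"
    using exp_converges[of "\<bar>a\<bar>"] by (simp_all add: sums_iff divide_inverse_commute)
  have "\<bar>\<Sum>n<N. a ^ n / fact n\<bar> \<le> (\<Sum>n<N. \<bar>a\<bar> ^ n / fact n)"
    by (rule order_trans[OF sum_abs]) (simp add: abs_mult power_abs)
  also have "\<dots> \<le> (\<Sum>n. \<bar>a\<bar> ^ n / fact n)"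
    by (rule sum_le_suminf[OF S]) auto
  finally show ?thesis unfolding E .
qed

lemma primitive01_exp:
  assumes U: "primitive01 u u'"
  shows "primitive01 (\<lambda>x. exp (u x)) (\<lambda>x. exp (u x) * u' x)"
proof -
  obtain M where M: "\<And>x. x \<in> {0..1} \<Longrightarrow> \<bar>u x\<bar> \<le> M"
    using continuous_on_01_bounded[OF primitive01_continuous[OF U]] by blast
  have "primitive01 (\<lambda>x. u x ^ Suc n / fact (Suc n)) (\<lambda>x. u x ^ n / fact n * u' x)" for n
    by (rule primitive01_cong[OF primitive01_cmult[OF primitive01_power[OF U, of n], of "1 / fact (Suc n)"]])
      (auto simp: fact_Suc divide_simps)
  then have "primitive01 (\<lambda>x. \<Sum>n<N. u x ^ Suc n / fact (Suc n)) (\<lambda>x. \<Sum>n<N. u x ^ n / fact n * u' x)"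
    for N by (rule primitive01_sum)
  then have "primitive01 (\<lambda>x. exp (u x) - 1) (\<lambda>x. exp (u x) * u' x)"
  proof (rule primitive01_limit)
    fix x :: real
    have "(\<lambda>N. \<Sum>n<N. u x ^ n / fact n) \<longlonglongrightarrow> exp (u x)"
      using exp_converges[of "u x"] by (simp add: sums_def divide_inverse_commute)
    from LIMSEQ_Suc[OF this]
    have "(\<lambda>N. 1 + (\<Sum>n<N. u x ^ Suc n / fact (Suc n))) \<longlonglongrightarrow> exp (u x)"
      by (simp only: sum.lessThan_Suc_shift) simp
    from tendsto_diff[OF this tendsto_const[of 1]]
    show "(\<lambda>N. \<Sum>n<N. u x ^ Suc n / fact (Suc n)) \<longlonglongrightarrow> exp (u x) - 1"
      by simp
    show "(\<lambda>N. \<Sum>n<N. u x ^ n / fact n * u' x) \<longlonglongrightarrow> exp (u x) * u' x"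
      using exp_converges[of "u x"]
      by (simp add: sums_def divide_inverse_commute sum_distrib_right[symmetric] tendsto_mult_right)
  next
    fix N and x :: real assume "x \<in> {0..1}"
    then have "exp \<bar>u x\<bar> \<le> exp M" using M by simp
    then have "\<bar>\<Sum>n<N. u x ^ n / fact n\<bar> \<le> exp M"
      using abs_exp_partial_sum_le[of "u x" N] by linarith
    then show "\<bar>\<Sum>n<N. u x ^ n / fact n * u' x\<bar> \<le> exp M * \<bar>u' x\<bar>"
      by (simp only: sum_distrib_right[symmetric] abs_mult mult_right_mono abs_ge_zero)
  qed (use primitive01_integrable[OF U] in simp)
  from primitive01_add[OF this primitive01_const[of 1]] show ?thesis by simp
qed

lemma primitive01_cosh_sinh:
  assumes "primitive01 u u'"
  shows "primitive01 (\<lambda>x. cosh (u x)) (\<lambda>x. sinh (u x) * u' x)"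
    and "primitive01 (\<lambda>x. sinh (u x)) (\<lambda>x. cosh (u x) * u' x)"
proof -
  note e1 = primitive01_exp[OF assms]
  have e2: "primitive01 (\<lambda>x. exp (- u x)) (\<lambda>x. exp (- u x) * (- u' x))"
    using primitive01_exp[OF primitive01_cmult[OF assms, of "-1"]] by simp
  show "primitive01 (\<lambda>x. cosh (u x)) (\<lambda>x. sinh (u x) * u' x)"
    by (rule primitive01_cong[OF primitive01_cmult[OF primitive01_add[OF e1 e2], of "1/2"]])
      (auto simp: cosh_field_def sinh_field_def field_simps)
  show "primitive01 (\<lambda>x. sinh (u x)) (\<lambda>x. cosh (u x) * u' x)"
    by (rule primitive01_cong[OF primitive01_cmult[OF primitive01_diff[OF e1 e2], of "1/2"]])
      (auto simp: cosh_field_def sinh_field_def field_simps)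
qed

subsection \<open>The operators at a fixed state\<close>

definition cum_mass :: "(real \<Rightarrow> real) \<Rightarrow> real \<Rightarrow> real" where
  "cum_mass \<rho> x = (LINT y:{0..x}|lborel. (\<rho> y)^2)"

definition cross_prim :: "(real \<Rightarrow> real) \<Rightarrow> (real \<Rightarrow> real) \<Rightarrow> real \<Rightarrow> real" where
  "cross_prim \<rho> \<sigma> x = (LINT y:{0..x}|lborel. 2 * \<rho> y * \<sigma> y)"

text \<open>The Green's function of \<open>1 - d\<^sup>2/d\<theta>\<^sup>2\<close> on a circle of length 1, in the variable \<open>\<theta> = cum_mass \<rho>\<close>.\<close>
definition green_kernel :: "(real \<Rightarrow> real) \<Rightarrow> real \<Rightarrow> real \<Rightarrow> real" where
  "green_kernel \<rho> x y =
     cosh (\<bar>LINT z:{min x y..max x y}|lborel. (\<rho> z)^2\<bar> - 1/2) / (2 * sinh (1/2))"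

definition Fop_density :: "real \<Rightarrow> (real \<Rightarrow> real) \<Rightarrow> (real \<Rightarrow> real) \<Rightarrow> real \<Rightarrow> real" where
  "Fop_density \<mu> \<rho> \<sigma> y = (\<rho> y)^2 * (Gop \<mu> \<rho> \<sigma> y)^2 + 2 * (\<sigma> y)^2"

lemma Gop_cross_prim:
  "Gop \<mu> \<rho> \<sigma> x = cross_prim \<rho> \<sigma> x + \<mu> - integral\<^sup>L lborel01 (\<lambda>y. cross_prim \<rho> \<sigma> y * (\<rho> y)^2)"
  unfolding Gop_def cross_prim_def set_integral_01_eq ..

lemma Fop_green_kernel:
  "Fop \<mu> \<rho> \<sigma> x = integral\<^sup>L lborel01 (\<lambda>y. green_kernel \<rho> x y * Fop_density \<mu> \<rho> \<sigma> y)"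
  unfolding Fop_def green_kernel_def Fop_density_def set_integral_01_eq ..

lemma green_kernel_sym: "green_kernel \<rho> x y = green_kernel \<rho> y x"
  unfolding green_kernel_def by (simp add: min.commute max.commute)

locale normalized_pair =
  fixes \<rho> \<sigma> :: "real \<Rightarrow> real" and \<mu> :: real
  assumes sqint_rho: "sqint01 \<rho>" and sqint_sigma: "sqint01 \<sigma>"
    and normalized: "integral\<^sup>L lborel01 (\<lambda>x. (\<rho> x)^2) = 1"
begin

lemma integrable_rho_sq: "integrable lborel01 (\<lambda>x. (\<rho> x)^2)"
  using sqint_rho by (rule sqint01_integrable_square)

lemma integrable_rho_sigma: "integrable lborel01 (\<lambda>x. 2 * \<rho> x * \<sigma> x)"
  using sqint01_integrable_mult[OF sqint_rho sqint_sigma] by (simp add: mult.assoc)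

lemma continuous_cum_mass: "continuous_on {0..1} (cum_mass \<rho>)"
  unfolding cum_mass_def using continuous_on_indefinite_integral_01[OF integrable_rho_sq] .

lemma continuous_cross_prim: "continuous_on {0..1} (cross_prim \<rho> \<sigma>)"
  unfolding cross_prim_def using continuous_on_indefinite_integral_01[OF integrable_rho_sigma] .

lemma continuous_Gop: "continuous_on {0..1} (Gop \<mu> \<rho> \<sigma>)"
  unfolding Gop_cross_prim by (intro continuous_intros continuous_cross_prim)

lemma cum_mass_diff:
  assumes "0 \<le> x" "x \<le> y" "y \<le> 1"
  shows "(LINT z:{x..y}|lborel. (\<rho> z)^2) = cum_mass \<rho> y - cum_mass \<rho> x"
    and "cum_mass \<rho> x \<le> cum_mass \<rho> y"
proof -
  show eq: "(LINT z:{x..y}|lborel. (\<rho> z)^2) = cum_mass \<rho> y - cum_mass \<rho> x"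
    using set_integral_Icc_combine_01[OF integrable_rho_sq, of 0 x y] assms
    unfolding cum_mass_def by simp
  have "0 \<le> integral {x..y} (\<lambda>z. (\<rho> z)^2)"
    using set_integral_Icc_eq_HK(1)[OF integrable_rho_sq, of x y] assms by (intro integral_nonneg) auto
  then show "cum_mass \<rho> x \<le> cum_mass \<rho> y"
    using eq set_integral_Icc_eq_HK(2)[OF integrable_rho_sq, of x y] assms by simp
qed

lemma cum_mass_0: "cum_mass \<rho> 0 = 0"
  unfolding cum_mass_def using set_integral_point_0[OF integrable_rho_sq] by simp

lemma cum_mass_1: "cum_mass \<rho> 1 = 1"
  unfolding cum_mass_def set_integral_01_eq normalized ..

lemma cum_mass_range: "x \<in> {0..1} \<Longrightarrow> 0 \<le> cum_mass \<rho> x \<and> cum_mass \<rho> x \<le> 1"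
  using cum_mass_diff(2)[of 0 x] cum_mass_diff(2)[of x 1] cum_mass_0 cum_mass_1 by auto

lemma green_kernel_cum_mass:
  assumes "x \<in> {0..1}" "y \<in> {0..1}"
  shows "green_kernel \<rho> x y = cosh (\<bar>cum_mass \<rho> x - cum_mass \<rho> y\<bar> - 1/2) / (2 * sinh (1/2))"
proof (cases "x \<le> y")
  case True
  then show ?thesis
    unfolding green_kernel_def using cum_mass_diff[of x y] assms by (simp add: abs_minus_commute)
next
  case False
  then show ?thesis
    unfolding green_kernel_def using cum_mass_diff[of y x] assms by simp
qed

lemma green_kernel_bounds:
  assumes "x \<in> {0..1}" "y \<in> {0..1}"
  shows "0 \<le> green_kernel \<rho> x y" "green_kernel \<rho> x y \<le> cosh (1/2) / (2 * sinh (1/2))"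
proof -
  have "\<bar>\<bar>cum_mass \<rho> x - cum_mass \<rho> y\<bar> - 1/2\<bar> \<le> 1/2"
    using cum_mass_range[OF assms(1)] cum_mass_range[OF assms(2)] by arith
  then have "cosh (\<bar>\<bar>cum_mass \<rho> x - cum_mass \<rho> y\<bar> - 1/2\<bar>) \<le> cosh (1/2)"
    by (subst cosh_real_nonneg_le_iff) auto
  then show "green_kernel \<rho> x y \<le> cosh (1/2) / (2 * sinh (1/2))"
    unfolding green_kernel_cum_mass[OF assms] by (intro divide_right_mono) auto
  show "0 \<le> green_kernel \<rho> x y"
    unfolding green_kernel_def by (intro divide_nonneg_nonneg) auto
qed

lemma continuous_green_kernel:
  assumes "y \<in> {0..1}"
  shows "continuous_on {0..1} (\<lambda>x. green_kernel \<rho> x y)" "continuous_on {0..1} (\<lambda>x. green_kernel \<rho> y x)"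
proof -
  have "continuous_on {0..1} (\<lambda>x. cosh (\<bar>cum_mass \<rho> x - cum_mass \<rho> y\<bar> - 1/2) / (2 * sinh (1/2)))"
    by (intro continuous_intros continuous_cum_mass) auto
  then show "continuous_on {0..1} (\<lambda>x. green_kernel \<rho> x y)"
    by (rule continuous_on_eq) (use green_kernel_cum_mass assms in auto)
  then show "continuous_on {0..1} (\<lambda>x. green_kernel \<rho> y x)"
    by (simp add: green_kernel_sym)
qed

lemma measurable_green_kernel [measurable]:
  "(\<lambda>p. green_kernel \<rho> (fst p) (snd p)) \<in> borel_measurable (lborel01 \<Otimes>\<^sub>M lborel01)"
proof -
  have [measurable]: "cum_mass \<rho> \<in> borel_measurable lborel01"
    using borel_measurable_continuous_on_01[OF continuous_cum_mass] .
  have [measurable]: "(cosh :: real \<Rightarrow> real) \<in> borel_measurable borel"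
    by (intro borel_measurable_continuous_onI continuous_intros)
  have "(\<lambda>p. cosh (\<bar>cum_mass \<rho> (fst p) - cum_mass \<rho> (snd p)\<bar> - 1/2) / (2 * sinh (1/2)))
      \<in> borel_measurable (lborel01 \<Otimes>\<^sub>M lborel01)"
    by measurable
  then show ?thesis
    by (rule measurable_cong[THEN iffD1, rotated]) (auto simp: space_pair_measure green_kernel_cum_mass)
qed

lemma integrable_Fop_density: "integrable lborel01 (Fop_density \<mu> \<rho> \<sigma>)"
proof -
  have "integrable lborel01 (\<lambda>y. (Gop \<mu> \<rho> \<sigma> y)^2 * (\<rho> y)^2)"
    by (intro integrable_continuous_on_mult integrable_rho_sq continuous_intros continuous_Gop)
  moreover have "integrable lborel01 (\<lambda>y. 2 * (\<sigma> y)^2)"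
    using sqint01_integrable_square[OF sqint_sigma] by simp
  ultimately show ?thesis unfolding Fop_density_def by (simp add: mult.commute)
qed

lemma integrable_green_kernel_mult:
  "x \<in> {0..1} \<Longrightarrow> integrable lborel01 (\<lambda>y. green_kernel \<rho> x y * Fop_density \<mu> \<rho> \<sigma> y)"
  by (intro integrable_continuous_on_mult integrable_Fop_density continuous_green_kernel)

lemma continuous_Fop: "continuous_on {0..1} (Fop \<mu> \<rho> \<sigma>)"
  unfolding Fop_green_kernel
  using continuous_green_kernel(1) integrable_green_kernel_mult green_kernel_bounds integrable_Fop_density
  by (intro continuous_on_kernel_integral[where C="cosh (1/2) / (2 * sinh (1/2))"]) auto

lemma sqint01_fop: "sqint01 (fop \<mu> \<rho> \<sigma>)"
proof -
  have c: "continuous_on {0..1} (\<lambda>x. 1/2 * ((Gop \<mu> \<rho> \<sigma> x)^2 - Fop \<mu> \<rho> \<sigma> x))"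
    by (intro continuous_intros continuous_Gop continuous_Fop)
  obtain M where "\<And>x. x \<in> {0..1} \<Longrightarrow> \<bar>1/2 * ((Gop \<mu> \<rho> \<sigma> x)^2 - Fop \<mu> \<rho> \<sigma> x)\<bar> \<le> M"
    using continuous_on_01_bounded[OF c] by blast
  then have "sqint01 (\<lambda>x. 1/2 * ((Gop \<mu> \<rho> \<sigma> x)^2 - Fop \<mu> \<rho> \<sigma> x) * \<rho> x)"
    by (intro sqint01_bounded_mult[OF sqint_rho borel_measurable_continuous_on_01[OF c]])
  then show ?thesis unfolding fop_def[abs_def] by (simp add: mult_ac)
qed

end

subsection \<open>The energy is a first integral at tangent states\<close>

text \<open>Time derivatives of \<open>cross_prim\<close>, \<open>Gop\<close> and the energy along \<open>\<rho>' = \<sigma>\<close>, \<open>\<sigma>' = fop \<mu> \<rho> \<sigma>\<close>.\<close>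
definition cross_prim_deriv :: "real \<Rightarrow> (real \<Rightarrow> real) \<Rightarrow> (real \<Rightarrow> real) \<Rightarrow> real \<Rightarrow> real" where
  "cross_prim_deriv \<mu> \<rho> \<sigma> x = (LINT y:{0..x}|lborel. 2 * ((\<sigma> y)^2 + \<rho> y * fop \<mu> \<rho> \<sigma> y))"

definition Gop_deriv :: "real \<Rightarrow> (real \<Rightarrow> real) \<Rightarrow> (real \<Rightarrow> real) \<Rightarrow> real \<Rightarrow> real" where
  "Gop_deriv \<mu> \<rho> \<sigma> x = cross_prim_deriv \<mu> \<rho> \<sigma> x
     - integral\<^sup>L lborel01 (\<lambda>y. cross_prim_deriv \<mu> \<rho> \<sigma> y * (\<rho> y)^2 + cross_prim \<rho> \<sigma> y * (2 * \<rho> y * \<sigma> y))"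

definition energy_deriv :: "real \<Rightarrow> (real \<Rightarrow> real) \<Rightarrow> (real \<Rightarrow> real) \<Rightarrow> real" where
  "energy_deriv \<mu> \<rho> \<sigma> = integral\<^sup>L lborel01 (\<lambda>x.
     2 * \<rho> x * \<sigma> x * (Gop \<mu> \<rho> \<sigma> x)^2 + 2 * (\<rho> x)^2 * Gop \<mu> \<rho> \<sigma> x * Gop_deriv \<mu> \<rho> \<sigma> x
     + 8 * \<sigma> x * fop \<mu> \<rho> \<sigma> x)"

locale tangent_pair = normalized_pair +
  assumes tangent: "integral\<^sup>L lborel01 (\<lambda>x. \<rho> x * \<sigma> x) = 0"
begin

abbreviation "G \<equiv> Gop \<mu> \<rho> \<sigma>"

definition weighted_prim :: "real \<Rightarrow> real" where
  "weighted_prim x = (LINT y:{0..x}|lborel. (\<rho> y)^2 * (G y - \<mu>))"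

definition green_source :: "real \<Rightarrow> real" where
  "green_source x = 2 * \<rho> x * \<sigma> x - weighted_prim x * (\<rho> x)^2"

definition green_primitive :: "real \<Rightarrow> real \<Rightarrow> real" where
  "green_primitive c x = cosh (cum_mass \<rho> x + c) * (G x - \<mu>) - sinh (cum_mass \<rho> x + c) * weighted_prim x"

lemma primitive01_cum_mass: "primitive01 (cum_mass \<rho>) (\<lambda>y. (\<rho> y)^2)"
  by (rule primitive01_cong[OF primitive01_indefinite_integral[OF integrable_rho_sq, of 0]])
    (auto simp: cum_mass_def)

lemma primitive01_cross_prim: "primitive01 (cross_prim \<rho> \<sigma>) (\<lambda>y. 2 * \<rho> y * \<sigma> y)"
  by (rule primitive01_cong[OF primitive01_indefinite_integral[OF integrable_rho_sigma, of 0]])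
    (auto simp: cross_prim_def)

lemma primitive01_Gop: "primitive01 G (\<lambda>y. 2 * \<rho> y * \<sigma> y)"
  by (rule primitive01_cong[OF primitive01_add[OF primitive01_cross_prim primitive01_const]])
    (auto simp: Gop_cross_prim)

lemma integrable_rho_sq_Gop: "integrable lborel01 (\<lambda>y. (\<rho> y)^2 * (G y - \<mu>))"
proof -
  have "continuous_on {0..1} (\<lambda>y. G y - \<mu>)" by (intro continuous_intros continuous_Gop)
  from integrable_continuous_on_mult[OF this integrable_rho_sq] show ?thesis
    by (simp add: mult.commute)
qed

lemma primitive01_weighted_prim: "primitive01 weighted_prim (\<lambda>y. (\<rho> y)^2 * (G y - \<mu>))"
  by (rule primitive01_cong[OF primitive01_indefinite_integral[OF integrable_rho_sq_Gop, of 0]])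
    (auto simp: weighted_prim_def)

lemma cross_prim_0: "cross_prim \<rho> \<sigma> 0 = 0"
  using set_integral_point_0[OF integrable_rho_sigma] by (simp add: cross_prim_def)

lemma cross_prim_1: "cross_prim \<rho> \<sigma> 1 = 0"
  using tangent unfolding cross_prim_def set_integral_01_eq by (simp add: mult.assoc)

lemma Gop_periodic: "G 1 = G 0"
  unfolding Gop_cross_prim cross_prim_0 cross_prim_1 ..

lemma integral_rho_sq_Gop: "integral\<^sup>L lborel01 (\<lambda>y. (\<rho> y)^2 * G y) = \<mu>"
proof -
  define c where "c = integral\<^sup>L lborel01 (\<lambda>y. cross_prim \<rho> \<sigma> y * (\<rho> y)^2)"
  have "integrable lborel01 (\<lambda>y. cross_prim \<rho> \<sigma> y * (\<rho> y)^2)"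
    by (rule integrable_continuous_on_mult[OF continuous_cross_prim integrable_rho_sq])
  then have "integral\<^sup>L lborel01 (\<lambda>y. (\<rho> y)^2 * G y)
      = c + (\<mu> - c) * integral\<^sup>L lborel01 (\<lambda>y. (\<rho> y)^2)"
    unfolding Gop_cross_prim c_def using integrable_rho_sq by (simp add: algebra_simps)
  then show ?thesis using normalized by simp
qed

lemma weighted_prim_0: "weighted_prim 0 = 0"
  using set_integral_point_0[OF integrable_rho_sq_Gop] by (simp add: weighted_prim_def)

lemma weighted_prim_1: "weighted_prim 1 = 0"
  using integral_rho_sq_Gop normalized integrable_rho_sq
    integrable_continuous_on_mult[OF continuous_Gop integrable_rho_sq]
  unfolding weighted_prim_def set_integral_01_eq by (simp add: right_diff_distrib mult.commute)

lemma integrable_green_source: "integrable lborel01 green_source"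
  unfolding green_source_def[abs_def]
  using integrable_rho_sigma integrable_continuous_on_mult[OF primitive01_continuous[OF
      primitive01_weighted_prim] integrable_rho_sq]
  by simp

text \<open>
  With \<open>\<theta> = cum_mass \<rho>\<close> we have \<open>d weighted_prim = (G - \<mu>) d\<theta>\<close> and
  \<open>green_source dx = dG - weighted_prim d\<theta>\<close>, which makes the following primitive exact.
\<close>
lemma primitive01_green_primitive:
  "primitive01 (green_primitive c) (\<lambda>x. cosh (cum_mass \<rho> x + c) * green_source x)"
proof -
  have U: "primitive01 (\<lambda>x. cum_mass \<rho> x + c) (\<lambda>y. (\<rho> y)^2)"
    by (rule primitive01_cong[OF primitive01_add[OF primitive01_cum_mass primitive01_const]]) auto
  have Gm: "primitive01 (\<lambda>x. G x - \<mu>) (\<lambda>y. 2 * \<rho> y * \<sigma> y)"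
    by (rule primitive01_cong[OF primitive01_diff[OF primitive01_Gop primitive01_const]]) auto
  note cs = primitive01_cosh_sinh[OF U]
  show ?thesis
    by (rule primitive01_cong[OF primitive01_diff[OF primitive01_mult[OF cs(1) Gm]
          primitive01_mult[OF cs(2) primitive01_weighted_prim]]])
      (auto simp: green_primitive_def green_source_def algebra_simps)
qed

lemma green_primitive_boundary:
  "green_primitive (1/2 - cum_mass \<rho> y) y - green_primitive (1/2 - cum_mass \<rho> y) 0
    + (green_primitive (- cum_mass \<rho> y - 1/2) 1 - green_primitive (- cum_mass \<rho> y - 1/2) y)
    = - 2 * sinh (1/2) * weighted_prim y"
proof -
  define a where "a = 1/2 - cum_mass \<rho> y"
  define b where "b = - cum_mass \<rho> y - 1/2"
  have e: "cum_mass \<rho> y + a = 1/2" "cum_mass \<rho> y + b = - (1/2)"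
    "cum_mass \<rho> 0 + a = a" "cum_mass \<rho> 1 + b = a"
    unfolding a_def b_def cum_mass_0 cum_mass_1 by auto
  have "green_primitive a y = cosh (1/2) * (G y - \<mu>) - sinh (1/2) * weighted_prim y"
    "green_primitive b y = cosh (1/2) * (G y - \<mu>) + sinh (1/2) * weighted_prim y"
    "green_primitive a 0 = cosh a * (G 0 - \<mu>)" "green_primitive b 1 = cosh a * (G 0 - \<mu>)"
    unfolding green_primitive_def e weighted_prim_0 weighted_prim_1 Gop_periodic by simp_all
  then show ?thesis
    unfolding a_def[symmetric] b_def[symmetric] by (simp add: algebra_simps)
qed

lemma set_integral_green_kernel_source:
  assumes y: "y \<in> {0..1}" and ab: "0 \<le> a" "a \<le> b" "b \<le> 1"
    and K: "\<And>x. x \<in> {a..b} \<Longrightarrow> green_kernel \<rho> x y = cosh (cum_mass \<rho> x + c) / (2 * sinh (1/2))"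
  shows "(LINT x:{a..b}|lborel. green_kernel \<rho> x y * green_source x)
    = (green_primitive c b - green_primitive c a) / (2 * sinh (1/2))"
proof -
  have "(LINT x:{a..b}|lborel. green_kernel \<rho> x y * green_source x)
      = (LINT x:{a..b}|lborel. cosh (cum_mass \<rho> x + c) * green_source x / (2 * sinh (1/2)))"
    using K by (intro set_lebesgue_integral_cong) auto
  also have "\<dots> = (LINT x:{a..b}|lborel. cosh (cum_mass \<rho> x + c) * green_source x) / (2 * sinh (1/2))"
    by simp
  finally show ?thesis
    using primitive01_integral_Icc[OF primitive01_green_primitive ab] by simp
qed

lemma integral_green_kernel_source:
  assumes y: "y \<in> {0..1}"
  shows "integral\<^sup>L lborel01 (\<lambda>x. green_kernel \<rho> x y * green_source x) = - weighted_prim y"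
proof -
  define a where "a = 1/2 - cum_mass \<rho> y"
  define b where "b = - cum_mass \<rho> y - 1/2"
  have "integrable lborel01 (\<lambda>x. green_kernel \<rho> x y * green_source x)"
    by (rule integrable_continuous_on_mult[OF continuous_green_kernel(1)[OF y] integrable_green_source])
  then have "integral\<^sup>L lborel01 (\<lambda>x. green_kernel \<rho> x y * green_source x)
      = (LINT x:{0..y}|lborel. green_kernel \<rho> x y * green_source x)
      + (LINT x:{y..1}|lborel. green_kernel \<rho> x y * green_source x)"
    using set_integral_Icc_combine_01[of _ 0 y 1] y by (simp add: set_integral_01_eq)
  also have "(LINT x:{0..y}|lborel. green_kernel \<rho> x y * green_source x)
      = (green_primitive a y - green_primitive a 0) / (2 * sinh (1/2))"
  proof (rule set_integral_green_kernel_source)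
    fix x assume "x \<in> {0..y}"
    then have "x \<in> {0..1}" "cum_mass \<rho> x \<le> cum_mass \<rho> y" using y cum_mass_diff(2)[of x y] by auto
    moreover have "cosh (cum_mass \<rho> x + a) = cosh (- (cum_mass \<rho> x + a))"
      by (rule cosh_minus[symmetric])
    ultimately show "green_kernel \<rho> x y = cosh (cum_mass \<rho> x + a) / (2 * sinh (1/2))"
      using green_kernel_cum_mass[of x y] y unfolding a_def by simp
  qed (use y in auto)
  also have "(LINT x:{y..1}|lborel. green_kernel \<rho> x y * green_source x)
      = (green_primitive b 1 - green_primitive b y) / (2 * sinh (1/2))"
  proof (rule set_integral_green_kernel_source)
    fix x assume "x \<in> {y..1}"
    then have "x \<in> {0..1}" "cum_mass \<rho> y \<le> cum_mass \<rho> x" using y cum_mass_diff(2)[of y x] by auto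
    then show "green_kernel \<rho> x y = cosh (cum_mass \<rho> x + b) / (2 * sinh (1/2))"
      using green_kernel_cum_mass[of x y] y unfolding b_def by simp
  qed (use y in auto)
  also have "(green_primitive a y - green_primitive a 0) / (2 * sinh (1/2))
      + (green_primitive b 1 - green_primitive b y) / (2 * sinh (1/2)) = - weighted_prim y"
    using green_primitive_boundary unfolding a_def b_def by (simp add: add_divide_distrib[symmetric])
  finally show ?thesis .
qed

lemma integral_Fop_green_source:
  "integral\<^sup>L lborel01 (\<lambda>x. Fop \<mu> \<rho> \<sigma> x * green_source x)
    = - integral\<^sup>L lborel01 (\<lambda>y. Fop_density \<mu> \<rho> \<sigma> y * weighted_prim y)"
proof -
  define k where "k x y = green_kernel \<rho> x y * Fop_density \<mu> \<rho> \<sigma> y * green_source x" for x y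
  have [measurable]: "green_source \<in> borel_measurable lborel01"
    "Fop_density \<mu> \<rho> \<sigma> \<in> borel_measurable lborel01"
    using integrable_green_source integrable_Fop_density by auto
  have km: "case_prod k \<in> borel_measurable (lborel01 \<Otimes>\<^sub>M lborel01)"
    unfolding k_def by measurable
  define C where "C = cosh (1/2) / (2 * sinh (1/2 :: real))"
  have "\<bar>k x y\<bar> \<le> \<bar>green_source x\<bar> * \<bar>C * Fop_density \<mu> \<rho> \<sigma> y\<bar>"
    if "x \<in> {0..1}" "y \<in> {0..1}" for x y
  proof -
    have "0 \<le> green_kernel \<rho> x y" "green_kernel \<rho> x y \<le> C"
      using green_kernel_bounds[OF that] unfolding C_def by auto
    then have "green_kernel \<rho> x y * (\<bar>Fop_density \<mu> \<rho> \<sigma> y\<bar> * \<bar>green_source x\<bar>)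
        \<le> C * (\<bar>Fop_density \<mu> \<rho> \<sigma> y\<bar> * \<bar>green_source x\<bar>)"
      by (intro mult_right_mono) auto
    moreover have "0 \<le> C" using \<open>0 \<le> green_kernel \<rho> x y\<close> \<open>green_kernel \<rho> x y \<le> C\<close> by linarith
    ultimately show ?thesis using \<open>0 \<le> green_kernel \<rho> x y\<close>
      unfolding k_def by (simp add: abs_mult mult_ac)
  qed
  note Fub = Fubini_lborel01[OF km integrable_green_source _ this]
  have "integral\<^sup>L lborel01 (\<lambda>x. Fop \<mu> \<rho> \<sigma> x * green_source x)
      = integral\<^sup>L lborel01 (\<lambda>x. integral\<^sup>L lborel01 (\<lambda>y. k x y))"
    unfolding Fop_green_kernel k_def by (simp add: mult.commute)
  also have "\<dots> = integral\<^sup>L lborel01 (\<lambda>y. integral\<^sup>L lborel01 (\<lambda>x. k x y))"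
    using Fub integrable_Fop_density by simp
  also have "\<dots> = integral\<^sup>L lborel01 (\<lambda>y. Fop_density \<mu> \<rho> \<sigma> y * - weighted_prim y)"
  proof (rule Bochner_Integration.integral_cong[OF refl])
    fix y assume "y \<in> space lborel01"
    moreover have "(\<lambda>x. k x y) = (\<lambda>x. Fop_density \<mu> \<rho> \<sigma> y * (green_kernel \<rho> x y * green_source x))"
      by (auto simp: k_def mult_ac)
    ultimately show "integral\<^sup>L lborel01 (\<lambda>x. k x y) = Fop_density \<mu> \<rho> \<sigma> y * - weighted_prim y"
      using integral_green_kernel_source[of y] by simp
  qed
  finally show ?thesis by simp
qed

lemma integral_rho_sigma_Gop_sq: "integral\<^sup>L lborel01 (\<lambda>x. \<rho> x * \<sigma> x * (G x)^2) = 0"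
proof -
  have "primitive01 (\<lambda>x. G x * (G x * G x)) (\<lambda>x. 6 * (\<rho> x * \<sigma> x * (G x)^2))"
    by (rule primitive01_cong[OF primitive01_mult[OF primitive01_Gop primitive01_mult[OF
          primitive01_Gop primitive01_Gop]]])
      (auto simp: power2_eq_square algebra_simps)
  from primitive01_integral[OF this] show ?thesis
    using Gop_periodic by simp
qed

lemma integral_cross_prim_rho_sigma: "integral\<^sup>L lborel01 (\<lambda>x. cross_prim \<rho> \<sigma> x * (2 * \<rho> x * \<sigma> x)) = 0"
proof -
  have "primitive01 (\<lambda>x. cross_prim \<rho> \<sigma> x * cross_prim \<rho> \<sigma> x)
      (\<lambda>x. 2 * (cross_prim \<rho> \<sigma> x * (2 * \<rho> x * \<sigma> x)))"
    by (rule primitive01_cong[OF primitive01_mult[OF primitive01_cross_prim primitive01_cross_prim]])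
      (auto simp: algebra_simps)
  from primitive01_integral[OF this]
  have "2 * integral\<^sup>L lborel01 (\<lambda>x. cross_prim \<rho> \<sigma> x * (2 * \<rho> x * \<sigma> x)) = 0"
    unfolding cross_prim_0 cross_prim_1 integral_mult_right_zero by simp
  then show ?thesis by simp
qed

abbreviation "f \<equiv> fop \<mu> \<rho> \<sigma>"

abbreviation "D \<equiv> cross_prim_deriv \<mu> \<rho> \<sigma>"

lemma primitive01_cross_prim_deriv: "primitive01 D (\<lambda>y. 2 * ((\<sigma> y)^2 + \<rho> y * f y))"
proof -
  have "integrable lborel01 (\<lambda>y. 2 * ((\<sigma> y)^2 + \<rho> y * f y))"
    using sqint01_integrable_square[OF sqint_sigma] sqint01_integrable_mult[OF sqint_rho sqint01_fop]
    by simp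
  from primitive01_indefinite_integral[OF this, of 0] show ?thesis
    by (rule primitive01_cong) (auto simp: cross_prim_deriv_def)
qed

lemma Gop_deriv_tangent:
  "Gop_deriv \<mu> \<rho> \<sigma> x = D x - integral\<^sup>L lborel01 (\<lambda>y. D y * (\<rho> y)^2)"
proof -
  have "integrable lborel01 (\<lambda>y. D y * (\<rho> y)^2)"
    by (rule integrable_continuous_on_mult[OF primitive01_continuous[OF primitive01_cross_prim_deriv]
          integrable_rho_sq])
  moreover have "integrable lborel01 (\<lambda>y. cross_prim \<rho> \<sigma> y * (2 * \<rho> y * \<sigma> y))"
    by (rule integrable_continuous_on_mult[OF continuous_cross_prim integrable_rho_sigma])
  ultimately show ?thesis
    using integral_cross_prim_rho_sigma unfolding Gop_deriv_def by simp
qed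

theorem energy_deriv_eq_0: "energy_deriv \<mu> \<rho> \<sigma> = 0"
proof -
  define P where "P = weighted_prim"
  define c where "c = integral\<^sup>L lborel01 (\<lambda>y. D y * (\<rho> y)^2)"
  define cube_term where "cube_term x = \<rho> x * \<sigma> x * (G x)^2" for x
  define PD_deriv where "PD_deriv x = (\<rho> x)^2 * (G x - \<mu>) * D x + P x * (2 * ((\<sigma> x)^2 + \<rho> x * f x))" for x
  define green_term where "green_term x = Fop \<mu> \<rho> \<sigma> x * green_source x + Fop_density \<mu> \<rho> \<sigma> x * P x" for x
  have cont: "continuous_on {0..1} P" "continuous_on {0..1} D"
    unfolding P_def
    by (rule primitive01_continuous[OF primitive01_weighted_prim],
        rule primitive01_continuous[OF primitive01_cross_prim_deriv])
  have PD: "primitive01 (\<lambda>x. P x * D x) PD_deriv"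
    using primitive01_mult[OF primitive01_weighted_prim primitive01_cross_prim_deriv]
    unfolding P_def PD_deriv_def[abs_def] .
  have "continuous_on {0..1} (\<lambda>x. (G x)^2)" by (intro continuous_intros continuous_Gop)
  from integrable_continuous_on_mult[OF this sqint01_integrable_mult[OF sqint_rho sqint_sigma]]
  have "integrable lborel01 cube_term" unfolding cube_term_def by (simp add: mult_ac)
  moreover have "integrable lborel01 (\<lambda>x. Fop \<mu> \<rho> \<sigma> x * green_source x)"
    "integrable lborel01 (\<lambda>x. Fop_density \<mu> \<rho> \<sigma> x * P x)"
    using integrable_continuous_on_mult[OF continuous_Fop integrable_green_source]
      integrable_continuous_on_mult[OF cont(1) integrable_Fop_density] by (simp_all add: mult.commute)
  then have "integrable lborel01 green_term" and green_term_0: "integral\<^sup>L lborel01 green_term = 0"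
    unfolding green_term_def using integral_Fop_green_source by (simp_all add: P_def)
  moreover have "integrable lborel01 (\<lambda>x. (\<rho> x)^2 * D x)" "integrable lborel01 (\<lambda>x. (\<rho> x)^2 * G x)"
    using integrable_continuous_on_mult[OF cont(2) integrable_rho_sq]
      integrable_continuous_on_mult[OF continuous_Gop integrable_rho_sq] by (simp_all add: mult.commute)
  moreover have "2 * \<rho> x * \<sigma> x * (G x)^2 + 2 * (\<rho> x)^2 * G x * Gop_deriv \<mu> \<rho> \<sigma> x + 8 * \<sigma> x * f x
      = 6 * cube_term x + 2 * PD_deriv x - 2 * green_term x + 2 * \<mu> * ((\<rho> x)^2 * D x) - 2 * c * ((\<rho> x)^2 * G x)" for x
    unfolding cube_term_def PD_deriv_def green_term_def Gop_deriv_tangent fop_def Fop_density_def green_source_def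
      c_def P_def
    by (simp add: power2_eq_square algebra_simps)
  ultimately have "energy_deriv \<mu> \<rho> \<sigma> = 6 * integral\<^sup>L lborel01 cube_term + 2 * integral\<^sup>L lborel01 PD_deriv
      - 2 * integral\<^sup>L lborel01 green_term + 2 * \<mu> * integral\<^sup>L lborel01 (\<lambda>x. (\<rho> x)^2 * D x)
      - 2 * c * integral\<^sup>L lborel01 (\<lambda>x. (\<rho> x)^2 * G x)"
    using primitive01_integrable[OF PD] unfolding energy_deriv_def by simp
  also have "\<dots> = 0"
    using integral_rho_sigma_Gop_sq primitive01_integral[OF PD] green_term_0
      integral_rho_sq_Gop weighted_prim_0 weighted_prim_1
    unfolding cube_term_def c_def P_def by (simp add: mult.commute)
  finally show ?thesis .
qed

end

subsection \<open>Differentiating the energy along a solution\<close>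

locale solution_at =
  fixes \<mu> :: real and I :: "real set" and \<rho> \<sigma> :: "real \<Rightarrow> real \<Rightarrow> real" and t :: real
  assumes sqint: "\<And>s. s \<in> I \<Longrightarrow> sqint01 (\<rho> s) \<and> sqint01 (\<sigma> s)"
    and deriv_rho: "has_L2_derivative \<rho> (\<sigma> t) t I"
    and deriv_sigma: "has_L2_derivative \<sigma> (fop \<mu> (\<rho> t) (\<sigma> t)) t I"
    and normalized: "\<And>s. s \<in> I \<Longrightarrow> (LINT x:{0..1}|lborel. (\<rho> s x)^2) = 1"
    and t_in_I: "t \<in> I"
begin

abbreviation "F \<equiv> at t within I"

lemma eventually_in_I: "eventually (\<lambda>s. s \<in> I) F"
  unfolding eventually_at_filter by simp

lemma eventually_ne_t: "eventually (\<lambda>s. s \<noteq> t) F"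
  unfolding eventually_at_filter by simp

lemma tendsto_ident: "((\<lambda>s. s) \<longlongrightarrow> t) F"
  by simp

lemma sqint_rho: "s \<in> I \<Longrightarrow> sqint01 (\<rho> s)" and sqint_sigma: "s \<in> I \<Longrightarrow> sqint01 (\<sigma> s)"
  using sqint by simp_all

lemma eventually_sqint_rho: "eventually (\<lambda>s. sqint01 (\<rho> s)) F"
  and eventually_sqint_sigma: "eventually (\<lambda>s. sqint01 (\<sigma> s)) F"
  using eventually_in_I by (auto elim!: eventually_mono simp: sqint)

sublocale T: normalized_pair "\<rho> t" "\<sigma> t" \<mu>
  using sqint_rho sqint_sigma normalized t_in_I by unfold_locales (auto simp: set_integral_01_eq)

abbreviation "f \<equiv> fop \<mu> (\<rho> t) (\<sigma> t)"

lemma L2_tendsto_diff_quot_rho: "L2_tendsto F (diff_quot t \<rho>) (\<sigma> t)"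
  by (intro L2_tendsto_diff_quot deriv_rho sqint_sigma sqint_rho t_in_I eventually_sqint_rho)

lemma L2_tendsto_diff_quot_sigma: "L2_tendsto F (diff_quot t \<sigma>) f"
  by (intro L2_tendsto_diff_quot deriv_sigma T.sqint01_fop sqint_sigma t_in_I eventually_sqint_sigma)

lemmas L1_tendsto_diff_quot_product = L1_tendsto_diff_quot_mult[OF _ _ _ _ eventually_ne_t tendsto_ident]

lemma tangent_at_t:
  assumes "F \<noteq> bot"
  shows "integral\<^sup>L lborel01 (\<lambda>x. \<rho> t x * \<sigma> t x) = 0"
proof -
  have "((\<lambda>s. integral\<^sup>L lborel01 (\<lambda>x. \<rho> s x * \<rho> s x)) has_real_derivative
      integral\<^sup>L lborel01 (\<lambda>x. \<sigma> t x * \<rho> t x + \<rho> t x * \<sigma> t x)) F"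
  proof (rule has_real_derivative_integral_L1)
    show "eventually (\<lambda>s. integrable lborel01 (\<lambda>x. \<rho> s x * \<rho> s x)) F"
      using eventually_sqint_rho by (rule eventually_mono) (rule sqint01_integrable_mult)
  qed (use L1_tendsto_diff_quot_product[OF L2_tendsto_diff_quot_rho L2_tendsto_diff_quot_rho]
      sqint01_integrable_mult sqint_rho t_in_I in auto)
  then have lim: "((\<lambda>s. (integral\<^sup>L lborel01 (\<lambda>x. \<rho> s x * \<rho> s x)
      - integral\<^sup>L lborel01 (\<lambda>x. \<rho> t x * \<rho> t x)) / (s - t))
      \<longlongrightarrow> integral\<^sup>L lborel01 (\<lambda>x. \<sigma> t x * \<rho> t x + \<rho> t x * \<sigma> t x)) F"
    by (simp add: has_field_derivative_iff)
  have "eventually (\<lambda>s. 0 = (integral\<^sup>L lborel01 (\<lambda>x. \<rho> s x * \<rho> s x)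
      - integral\<^sup>L lborel01 (\<lambda>x. \<rho> t x * \<rho> t x)) / (s - t)) F"
    using eventually_in_I
    by (rule eventually_mono) (use normalized t_in_I in \<open>simp add: set_integral_01_eq power2_eq_square\<close>)
  from tendsto_unique[OF assms lim Lim_transform_eventually[OF tendsto_const this]]
  have "integral\<^sup>L lborel01 (\<lambda>x. \<sigma> t x * \<rho> t x + \<rho> t x * \<sigma> t x) = 0" .
  then show ?thesis
    using sqint01_integrable_mult[OF sqint_rho sqint_sigma, OF t_in_I t_in_I] by (simp add: mult.commute)
qed

lemmas L1_tendsto_diff_quot_product_unif =
  L1_tendsto_diff_quot_mult_unif[OF _ _ _ _ eventually_ne_t tendsto_ident]

lemma L1_tendsto_diff_quot_rho_sq:
  "L1_tendsto F (diff_quot t (\<lambda>s x. \<rho> s x * \<rho> s x)) (\<lambda>x. 2 * (\<rho> t x * \<sigma> t x))"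
  using L1_tendsto_diff_quot_product[OF L2_tendsto_diff_quot_rho L2_tendsto_diff_quot_rho
      sqint_rho sqint_rho] t_in_I by (simp add: mult.commute)

abbreviation "A s \<equiv> cross_prim (\<rho> s) (\<sigma> s)"
abbreviation "G s \<equiv> Gop \<mu> (\<rho> s) (\<sigma> s)"
abbreviation "Gop_offset s \<equiv> integral\<^sup>L lborel01 (\<lambda>x. \<rho> s x * \<rho> s x * A s x)"

lemma continuous_cross_prim_at: "s \<in> I \<Longrightarrow> continuous_on {0..1} (A s)"
  unfolding cross_prim_def using sqint01_integrable_mult[OF sqint_rho sqint_sigma]
  by (intro continuous_on_indefinite_integral_01) (simp add: mult.assoc)

lemma unif_tendsto_diff_quot_cross_prim:
  "unif_tendsto F (diff_quot t A) (cross_prim_deriv \<mu> (\<rho> t) (\<sigma> t))"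
proof (rule unif_tendsto_cong[OF unif_tendsto_indefinite_integral[OF L1_tendsto_cmult[OF
        L1_tendsto_diff_quot_product[OF L2_tendsto_diff_quot_rho L2_tendsto_diff_quot_sigma
          sqint_rho sqint_sigma], of 2]]])
  show "eventually (\<lambda>s. \<forall>x\<in>{0..1}. (LINT y:{0..x}|lborel. 2 * diff_quot t (\<lambda>s x. \<rho> s x * \<sigma> s x) s y)
      = diff_quot t A s x) F"
    using eventually_in_I
  proof (rule eventually_mono, intro ballI)
    fix s x :: real assume s: "s \<in> I" and x: "x \<in> {0..1}"
    have "integrable lborel01 (\<lambda>y. 2 * \<rho> r y * \<sigma> r y)" if "r \<in> I" for r
      using sqint01_integrable_mult[OF sqint_rho sqint_sigma, OF that that] by (simp add: mult.assoc)
    then have "diff_quot t A s x = (LINT y:{0..x}|lborel. 2 * \<rho> s y * \<sigma> s y - 2 * \<rho> t y * \<sigma> t y) / (s - t)"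
      using s x t_in_I unfolding diff_quot_def cross_prim_def
      by (subst set_integral_diff(2)) (auto intro: set_integrable_Icc_01)
    also have "\<dots> = (LINT y:{0..x}|lborel. (2 * \<rho> s y * \<sigma> s y - 2 * \<rho> t y * \<sigma> t y) / (s - t))"
      by simp
    also have "\<dots> = (LINT y:{0..x}|lborel. 2 * diff_quot t (\<lambda>s x. \<rho> s x * \<sigma> s x) s y)"
      unfolding diff_quot_def by (rule set_lebesgue_integral_cong) (auto simp: field_simps)
    finally show "(LINT y:{0..x}|lborel. 2 * diff_quot t (\<lambda>s x. \<rho> s x * \<sigma> s x) s y) = diff_quot t A s x"
      by simp
  qed
qed (use t_in_I in \<open>simp_all add: cross_prim_deriv_def power2_eq_square\<close>)

lemma has_real_derivative_Gop_offset:
  "(Gop_offset has_real_derivative integral\<^sup>L lborel01 (\<lambda>y.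
      cross_prim_deriv \<mu> (\<rho> t) (\<sigma> t) y * (\<rho> t y)^2 + A t y * (2 * \<rho> t y * \<sigma> t y))) F"
proof -
  have i: "integrable lborel01 (\<lambda>x. \<rho> s x * \<rho> s x * A s x)" if "s \<in> I" for s
    using integrable_continuous_on_mult[OF continuous_cross_prim_at[OF that]
        sqint01_integrable_mult[OF sqint_rho[OF that] sqint_rho[OF that]]]
    by (simp add: mult.commute)
  have "(Gop_offset has_real_derivative integral\<^sup>L lborel01 (\<lambda>x. 2 * (\<rho> t x * \<sigma> t x) * A t x
      + \<rho> t x * \<rho> t x * cross_prim_deriv \<mu> (\<rho> t) (\<sigma> t) x)) F"
    using eventually_mono[OF eventually_in_I i]
    by (intro has_real_derivative_integral_L1 L1_tendsto_diff_quot_product_unif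
        L1_tendsto_diff_quot_rho_sq unif_tendsto_diff_quot_cross_prim i t_in_I
        sqint01_integrable_mult sqint_rho continuous_cross_prim_at)
  then show ?thesis
    by (simp add: power2_eq_square algebra_simps)
qed

lemma Gop_eq_offset: "G s x = A s x + \<mu> - Gop_offset s"
  by (simp add: Gop_cross_prim power2_eq_square mult_ac)

lemma continuous_Gop_at: "s \<in> I \<Longrightarrow> continuous_on {0..1} (G s)"
  unfolding Gop_eq_offset by (intro continuous_intros continuous_cross_prim_at)

lemma unif_tendsto_diff_quot_Gop: "unif_tendsto F (diff_quot t G) (Gop_deriv \<mu> (\<rho> t) (\<sigma> t))"
proof -
  have "diff_quot t G = (\<lambda>s x. diff_quot t A s x - (Gop_offset s - Gop_offset t) / (s - t))"
    by (intro ext) (simp add: diff_quot_def Gop_eq_offset diff_divide_distrib[symmetric])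
  with unif_tendsto_diff[OF unif_tendsto_diff_quot_cross_prim unif_tendsto_const_fun[OF
        has_real_derivative_Gop_offset[unfolded has_field_derivative_iff]]]
  show ?thesis unfolding Gop_deriv_def[abs_def] by simp
qed

lemma has_real_derivative_energy_at:
  "((\<lambda>s. integral\<^sup>L lborel01 (\<lambda>x. \<rho> s x * \<rho> s x * (G s x * G s x) + 4 * (\<sigma> s x * \<sigma> s x)))
    has_real_derivative energy_deriv \<mu> (\<rho> t) (\<sigma> t)) F" (is "(?E has_real_derivative _) F")
proof -
  define E' where "E' x = 2 * (\<rho> t x * \<sigma> t x) * (G t x * G t x)
    + \<rho> t x * \<rho> t x * (Gop_deriv \<mu> (\<rho> t) (\<sigma> t) x * G t x + G t x * Gop_deriv \<mu> (\<rho> t) (\<sigma> t) x)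
    + 4 * (f x * \<sigma> t x + \<sigma> t x * f x)" for x
  have i: "integrable lborel01 (\<lambda>x. \<rho> s x * \<rho> s x * (G s x * G s x) + 4 * (\<sigma> s x * \<sigma> s x))"
    if "s \<in> I" for s
    using integrable_continuous_on_mult[OF continuous_on_mult[OF continuous_Gop_at continuous_Gop_at, OF that that]
        sqint01_integrable_mult[OF sqint_rho[OF that] sqint_rho[OF that]]]
      sqint01_integrable_mult[OF sqint_sigma[OF that] sqint_sigma[OF that]]
    by (simp add: mult.commute)
  have cG: "continuous_on {0..1} (G t)" by (rule continuous_Gop_at[OF t_in_I])
  have "L1_tendsto F (diff_quot t (\<lambda>s x. \<rho> s x * \<rho> s x * (G s x * G s x) + 4 * (\<sigma> s x * \<sigma> s x))) E'"
    unfolding diff_quot_add E'_def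
    by (rule L1_tendsto_add[OF L1_tendsto_diff_quot_product_unif[OF L1_tendsto_diff_quot_rho_sq
            unif_tendsto_diff_quot_mult[OF unif_tendsto_diff_quot_Gop unif_tendsto_diff_quot_Gop
              cG cG eventually_ne_t tendsto_ident]
            sqint01_integrable_mult[OF sqint_rho sqint_rho, OF t_in_I t_in_I] continuous_on_mult[OF cG cG]]
          L1_tendsto_cmult[OF L1_tendsto_diff_quot_product[OF L2_tendsto_diff_quot_sigma
            L2_tendsto_diff_quot_sigma sqint_sigma sqint_sigma, OF t_in_I t_in_I]]])
  moreover have "eventually (\<lambda>s. integrable lborel01
      (\<lambda>x. \<rho> s x * \<rho> s x * (G s x * G s x) + 4 * (\<sigma> s x * \<sigma> s x))) F"
    using eventually_in_I by (rule eventually_mono) (rule i)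
  ultimately have "(?E has_real_derivative integral\<^sup>L lborel01 E') F"
    using i[OF t_in_I] by (intro has_real_derivative_integral_L1)
  moreover have "integral\<^sup>L lborel01 E' = energy_deriv \<mu> (\<rho> t) (\<sigma> t)"
    unfolding energy_deriv_def E'_def
    by (rule Bochner_Integration.integral_cong) (simp_all add: power2_eq_square algebra_simps)
  ultimately show ?thesis by simp
qed

theorem has_real_derivative_energy_0:
  "((\<lambda>s. integral\<^sup>L lborel01 (\<lambda>x. (\<rho> s x)^2 * (G s x)^2 + 4 * (\<sigma> s x)^2))
    has_real_derivative 0) F"
proof (cases "F = bot")
  case True
  then show ?thesis by (simp add: has_field_derivative_iff)
next
  case False
  have "tangent_pair (\<rho> t) (\<sigma> t)"
    by (intro tangent_pair.intro T.normalized_pair_axioms tangent_pair_axioms.intro tangent_at_t False)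
  then have "energy_deriv \<mu> (\<rho> t) (\<sigma> t) = 0"
    by (rule tangent_pair.energy_deriv_eq_0)
  with has_real_derivative_energy_at show ?thesis
    by (simp add: power2_eq_square)
qed

end

theorem proposition6:
  fixes \<mu> :: real and I :: "real set" and \<rho> \<rho>\<^sub>t :: "real \<Rightarrow> real \<Rightarrow> real"
  assumes "is_interval I"
    and "\<And>t. t \<in> I \<Longrightarrow> sqint01 (\<rho> t) \<and> sqint01 (\<rho>\<^sub>t t)"
    and "\<And>t. t \<in> I \<Longrightarrow> has_L2_derivative \<rho> (\<rho>\<^sub>t t) t I"
    and "\<And>t. t \<in> I \<Longrightarrow> has_L2_derivative \<rho>\<^sub>t (fop \<mu> (\<rho> t) (\<rho>\<^sub>t t)) t I"
    and "\<And>t. t \<in> I \<Longrightarrow> (LINT x:{0..1}|lborel. (\<rho> t x)^2) = 1"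
    and "t \<in> I"
  shows "((\<lambda>s. LINT x:{0..1}|lborel.
             (\<rho> s x)^2 * (Gop \<mu> (\<rho> s) (\<rho>\<^sub>t s) x)^2 + 4 * (\<rho>\<^sub>t s x)^2)
          has_real_derivative 0) (at t within I)"
proof -
  \<comment> \<open>Only the behaviour at \<open>t\<close> within \<open>I\<close> matters.\<close>
  interpret solution_at \<mu> I \<rho> \<rho>\<^sub>t t
    using assms(2-6) by unfold_locales auto
  show ?thesis
    using has_real_derivative_energy_0 by (simp add: set_integral_01_eq)
qed

end
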